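(* Let $d\ge1$ and let $\zeta=\{\zeta_k\}_{k\in\mathbb{Z}^d}$ be a stationary random field with $\mathrm{E}(\zeta_0)=0$, $\mathrm{Var}(\zeta_0)<\infty$ and $\sum_{k\in\mathbb{Z}^d}|\mathrm{Cov}(\zeta_0,\zeta_k)|<\infty$; set $\sigma^2:=\sum_{k\in\mathbb{Z}^d}\mathrm{Cov}(\zeta_0,\zeta_k)$. Let $\mathscr{D}$ be a subset of $\mathscr{C}$ that is dense in $\mathscr{C}$ with respect to the $L^2(\mathbb{R}^d)$ norm, and suppose that $S_n(\psi)$ converges in distribution to $\sigma W(\psi)$ as $n\to\infty$ for every $\psi\in\mathscr{D}$. Then the finite-dimensional distributions of $\{S_n(\varphi);\varphi\in\mathscr{C}\}$ converge weakly to those of $\{\sigma W(\varphi);\varphi\in\mathscr{C}\}$ as $n\to\infty$.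
   Context: $\mathscr{C}$ is the class of piecewise-continuous functions $\varphi:\mathbb{R}^d\to\mathbb{R}$ with compact support (continuous except on finitely many hyperplanes). For $\varphi\in\mathscr{C}$ and $n\in\mathbb{N}$, $S_n(\varphi):=n^{-d/2}\sum_{k\in\mathbb{Z}^d}\zeta_k\varphi(k/n)$. $W=\{W(\varphi);\varphi\in L^2(\mathbb{R}^d)\}$ is the isonormal Gaussian process of white noise on $\mathbb{R}^d$: a centered Gaussian process with $\mathrm{Cov}[W(\varphi_1),W(\varphi_2)]=\langle\varphi_1,\varphi_2\rangle_{L^2(\mathbb{R}^d)}$. *)

theory Defs
  imports "HOL-Probability.Probability"
begin

definition hyperplane :: "'a::euclidean_space set \<Rightarrow> bool" where
  "hyperplane H \<longleftrightarrow> (\<exists>a b. a \<noteq> 0 \<and> H = {x. a \<bullet> x = b})"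

definition pwC :: "('a::euclidean_space \<Rightarrow> real) set" where
  "pwC = {\<phi>. (\<exists>\<H>. finite \<H> \<and> (\<forall>H\<in>\<H>. hyperplane H) \<and> (\<forall>x. x \<notin> \<Union>\<H> \<longrightarrow> isCont \<phi> x))
             \<and> bounded (range \<phi>) \<and> bounded {x. \<phi> x \<noteq> 0}}"

definition L2 :: "('a::euclidean_space \<Rightarrow> real) set" where
  "L2 = {\<phi>. \<phi> \<in> borel_measurable lebesgue \<and> integrable lebesgue (\<lambda>x. (\<phi> x)\<^sup>2)}"

definition L2_inner :: "('a::euclidean_space \<Rightarrow> real) \<Rightarrow> ('a \<Rightarrow> real) \<Rightarrow> real" where
  "L2_inner \<phi> \<psi> = integral\<^sup>L lebesgue (\<lambda>x. \<phi> x * \<psi> x)"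

definition L2_dist :: "('a::euclidean_space \<Rightarrow> real) \<Rightarrow> ('a \<Rightarrow> real) \<Rightarrow> real" where
  "L2_dist \<phi> \<psi> = sqrt (integral\<^sup>L lebesgue (\<lambda>x. (\<phi> x - \<psi> x)\<^sup>2))"

definition L2_dense_in :: "('a::euclidean_space \<Rightarrow> real) set \<Rightarrow> ('a \<Rightarrow> real) set \<Rightarrow> bool" where
  "L2_dense_in D C \<longleftrightarrow> D \<subseteq> C \<and> (\<forall>\<phi>\<in>C. \<forall>e>0. \<exists>\<psi>\<in>D. L2_dist \<phi> \<psi> < e)"

definition centered_gaussian :: "real \<Rightarrow> real measure" where
  "centered_gaussian v =
     (if v = 0 then return borel 0 else density lborel (normal_density 0 (sqrt v)))"

text \<open>Isonormal Gaussian process of white noise on the Euclidean space 'd, defined on the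
  probability space N: a centered Gaussian process indexed by L2 with covariance the L2 inner
  product (joint Gaussianity = every finite linear combination is centered Gaussian with the
  corresponding variance).\<close>
definition isonormal :: "'w measure \<Rightarrow> (('d::euclidean_space \<Rightarrow> real) \<Rightarrow> 'w \<Rightarrow> real) \<Rightarrow> bool" where
  "isonormal N W \<longleftrightarrow> prob_space N \<and> (\<forall>\<phi>\<in>L2. W \<phi> \<in> borel_measurable N) \<and>
     (\<forall>F c. finite F \<and> F \<subseteq> L2 \<longrightarrow>
        distr N borel (\<lambda>\<omega>. \<Sum>\<phi>\<in>F. c \<phi> * W \<phi> \<omega>)
          = centered_gaussian (\<Sum>\<phi>\<in>F. \<Sum>\<psi>\<in>F. c \<phi> * c \<psi> * L2_inner \<phi> \<psi>))"

definition stationary_field :: "'a measure \<Rightarrow> ('i::ab_group_add \<Rightarrow> 'a \<Rightarrow> real) \<Rightarrow> bool" where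
  "stationary_field M \<zeta> \<longleftrightarrow> (\<forall>h K. finite K \<longrightarrow>
      distr M (PiM K (\<lambda>_. borel)) (\<lambda>\<omega>. \<lambda>k\<in>K. \<zeta> (k + h) \<omega>)
        = distr M (PiM K (\<lambda>_. borel)) (\<lambda>\<omega>. \<lambda>k\<in>K. \<zeta> k \<omega>))"

definition covariance :: "'a measure \<Rightarrow> ('a \<Rightarrow> real) \<Rightarrow> ('a \<Rightarrow> real) \<Rightarrow> real" where
  "covariance M X Y = integral\<^sup>L M (\<lambda>\<omega>. (X \<omega> - integral\<^sup>L M X) * (Y \<omega> - integral\<^sup>L M Y))"

definition lattice_pt :: "nat \<Rightarrow> int^'d \<Rightarrow> real^'d" where
  "lattice_pt n k = (\<chi> i. real_of_int (k $ i) / real n)"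

text \<open>S_n(phi) = n^(-d/2) * sum_k zeta_k phi(k/n); the sum has finitely many nonzero terms
  for phi in C.\<close>
definition S :: "(int^'d \<Rightarrow> 'a \<Rightarrow> real) \<Rightarrow> nat \<Rightarrow> (real^'d \<Rightarrow> real) \<Rightarrow> 'a \<Rightarrow> real" where
  "S \<zeta> n \<phi> \<omega> = real n powr (- real CARD('d) / 2) *
      (\<Sum>k | \<phi> (lattice_pt n k) \<noteq> 0. \<zeta> k \<omega> * \<phi> (lattice_pt n k))"

definition conv_distr :: "(nat \<Rightarrow> 'b::topological_space measure) \<Rightarrow> 'b measure \<Rightarrow> bool" where
  "conv_distr \<mu>s \<mu> \<longleftrightarrow> (\<forall>f::'b \<Rightarrow> real. continuous_on UNIV f \<and> bounded (range f) \<longrightarrow>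
      (\<lambda>n. integral\<^sup>L (\<mu>s n) f) \<longlonglongrightarrow> integral\<^sup>L \<mu> f)"

end

(* By the Cramer-Wold device it suffices to show that every linear combination
   sum_i t_i S_n(phi_i) = S_n(sum_i t_i phi_i) converges in law to sigma sum_i t_i W(phi_i).
   Given Phi in C, pick psi in D close to Phi in L2 and put h = Phi - psi.  Stationarity and
   summable covariances give E S_n(h)^2 <= (sum_k |Cov(zeta_0, zeta_k)|) n^-d sum_k h(k/n)^2,
   a Riemann sum tending to (sum_k |Cov(zeta_0, zeta_k)|) ||h||^2; on the Gaussian side the
   difference is centred normal with variance sigma^2 ||h||^2.  So S_n(Phi) and the limit are
   uniformly L1-close to S_n(psi) and sigma W(psi), which converge by hypothesis, and a
   sequence uniformly L1-close to convergent ones converges in law.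
   The Cramer-Wold device itself is proved by approximating a bounded continuous function on
   a large cube by a trigonometric polynomial (Stone-Weierstrass on a torus), with tightness of
   the limit law controlling the complement of the cube. *)

theory Submission
  imports Defs
begin

section \<open>Convergence in distribution\<close>

lemma conv_distr_distr_iff:
  fixes Xn :: "nat \<Rightarrow> 'a \<Rightarrow> 'c::topological_space" and X :: "'b \<Rightarrow> 'c"
  assumes "\<And>n. Xn n \<in> borel_measurable M" "X \<in> borel_measurable N"
  shows "conv_distr (\<lambda>n. distr M borel (Xn n)) (distr N borel X) \<longleftrightarrow>
    (\<forall>f::'c \<Rightarrow> real. continuous_on UNIV f \<and> bounded (range f) \<longrightarrow>
      (\<lambda>n. \<integral>\<omega>. f (Xn n \<omega>) \<partial>M) \<longlonglongrightarrow> (\<integral>\<omega>. f (X \<omega>) \<partial>N))"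
proof -
  have "integral\<^sup>L (distr M borel (Xn n)) f = (\<integral>\<omega>. f (Xn n \<omega>) \<partial>M)"
    and "integral\<^sup>L (distr N borel X) f = (\<integral>\<omega>. f (X \<omega>) \<partial>N)"
    if "continuous_on UNIV f" for f :: "'c \<Rightarrow> real" and n
    using assms borel_measurable_continuous_onI[OF that] by (simp_all add: integral_distr)
  then show ?thesis unfolding conv_distr_def by simp
qed

lemma integrable_continuous_bounded_comp:
  fixes g :: "'c::topological_space \<Rightarrow> real"
  assumes "finite_measure P" "Y \<in> borel_measurable P" "continuous_on UNIV g" "bounded (range g)"
  shows "integrable P (\<lambda>\<omega>. g (Y \<omega>))"
proof -
  obtain B where "\<And>x. \<bar>g x\<bar> \<le> B" using assms(4) unfolding bounded_iff by auto
  moreover have "g \<in> borel_measurable borel" using assms(3) by (rule borel_measurable_continuous_onI)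
  with assms(2) have "(\<lambda>\<omega>. g (Y \<omega>)) \<in> borel_measurable P" by measurable
  ultimately show ?thesis
    using assms(1) by (intro finite_measure.integrable_const_bound[where B=B]) auto
qed

lemma abs_integral_diff_le:
  fixes f g \<Phi> :: "'c \<Rightarrow> real"
  assumes "integrable P f" "integrable P g" "integrable P \<Phi>" "\<And>\<omega>. \<bar>f \<omega> - g \<omega>\<bar> \<le> \<Phi> \<omega>"
  shows "\<bar>integral\<^sup>L P f - integral\<^sup>L P g\<bar> \<le> integral\<^sup>L P \<Phi>"
proof -
  have "\<bar>integral\<^sup>L P f - integral\<^sup>L P g\<bar> = \<bar>\<integral>\<omega>. f \<omega> - g \<omega> \<partial>P\<bar>"
    using assms(1,2) by simp
  also have "\<dots> \<le> (\<integral>\<omega>. \<bar>f \<omega> - g \<omega>\<bar> \<partial>P)"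
    using integral_norm_bound[of P "\<lambda>\<omega>. f \<omega> - g \<omega>"] by simp
  also have "\<dots> \<le> integral\<^sup>L P \<Phi>"
    using assms by (intro integral_mono) auto
  finally show ?thesis .
qed

lemma abs_integral_comp_diff_le:
  fixes f g \<Psi> :: "'c::topological_space \<Rightarrow> real"
  assumes "prob_space P" "Y \<in> borel_measurable P"
    and "continuous_on UNIV f" "bounded (range f)" "continuous_on UNIV g" "bounded (range g)"
    and "continuous_on UNIV \<Psi>" "bounded (range \<Psi>)" "\<And>x. \<bar>f x - g x\<bar> \<le> \<eta> + \<Psi> x"
  shows "\<bar>(\<integral>\<omega>. f (Y \<omega>) \<partial>P) - (\<integral>\<omega>. g (Y \<omega>) \<partial>P)\<bar> \<le> \<eta> + (\<integral>\<omega>. \<Psi> (Y \<omega>) \<partial>P)"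
proof -
  interpret prob_space P by fact
  have "integrable P (\<lambda>\<omega>. f (Y \<omega>))" "integrable P (\<lambda>\<omega>. g (Y \<omega>))" "integrable P (\<lambda>\<omega>. \<Psi> (Y \<omega>))"
    using assms(2-8) by (auto intro: integrable_continuous_bounded_comp finite_measure_axioms)
  then have "\<bar>(\<integral>\<omega>. f (Y \<omega>) \<partial>P) - (\<integral>\<omega>. g (Y \<omega>) \<partial>P)\<bar> \<le> (\<integral>\<omega>. \<eta> + \<Psi> (Y \<omega>) \<partial>P)"
    using assms(9) by (intro abs_integral_diff_le) auto
  also have "\<dots> = \<eta> + (\<integral>\<omega>. \<Psi> (Y \<omega>) \<partial>P)"
    using \<open>integrable P (\<lambda>\<omega>. \<Psi> (Y \<omega>))\<close> by (simp add: prob_space)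
  finally show ?thesis .
qed

lemma borel_measurable_vec_lambda:
  fixes f :: "'i::finite \<Rightarrow> 'a \<Rightarrow> real"
  assumes "\<And>i. f i \<in> borel_measurable M"
  shows "(\<lambda>\<omega>. \<chi> i. f i \<omega>) \<in> borel_measurable M"
proof (rule borel_measurable_euclidean_space[THEN iffD2], intro ballI)
  fix b :: "real^'i" assume "b \<in> Basis"
  then obtain i where "b = axis i 1" unfolding Basis_vec_def by auto
  then show "(\<lambda>\<omega>. (\<chi> i. f i \<omega>) \<bullet> b) \<in> borel_measurable M"
    using assms by (simp add: inner_axis)
qed

lemma cts_step_lipschitz:
  assumes "x < y"
  shows "\<bar>cts_step x y a - cts_step x y b\<bar> \<le> \<bar>a - b\<bar> / (y - x)"
proof -
  have clamp: "cts_step x y c = min 1 (max 0 ((y - c) / (y - x)))" for c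
    using assms by (auto simp: cts_step_def min_def max_def field_simps)
  have "\<bar>min 1 (max 0 s) - min 1 (max 0 t)\<bar> \<le> \<bar>s - t\<bar>" for s t :: real
    by (auto simp: min_def max_def)
  then have "\<bar>cts_step x y a - cts_step x y b\<bar> \<le> \<bar>(y - a) / (y - x) - (y - b) / (y - x)\<bar>"
    unfolding clamp .
  also have "\<dots> = \<bar>a - b\<bar> / (y - x)"
    using assms by (simp add: diff_divide_distrib[symmetric] abs_minus_commute)
  finally show ?thesis .
qed

lemma continuous_cts_step: "x < y \<Longrightarrow> continuous_on UNIV (cts_step x y)"
  by (rule uniformly_continuous_imp_continuous, rule cts_step_uniformly_continuous)

lemma bounded_range_cts_step: "bounded (range (cts_step x y))"
  unfolding bounded_iff by (intro exI[of _ 1]) (auto simp: cts_step_def)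

lemma lipschitz_integral_diff_le:
  fixes \<phi> :: "real \<Rightarrow> real"
  assumes "finite_measure P" "continuous_on UNIV \<phi>" "bounded (range \<phi>)"
    and lipschitz: "\<And>a b. \<bar>\<phi> a - \<phi> b\<bar> \<le> \<Lambda> * \<bar>a - b\<bar>"
    and "Y \<in> borel_measurable P" "Z \<in> borel_measurable P" "integrable P (\<lambda>\<omega>. Y \<omega> - Z \<omega>)"
  shows "\<bar>(\<integral>\<omega>. \<phi> (Y \<omega>) \<partial>P) - (\<integral>\<omega>. \<phi> (Z \<omega>) \<partial>P)\<bar> \<le> \<Lambda> * (\<integral>\<omega>. \<bar>Y \<omega> - Z \<omega>\<bar> \<partial>P)"
proof -
  have "integrable P (\<lambda>\<omega>. \<phi> (Y \<omega>))" "integrable P (\<lambda>\<omega>. \<phi> (Z \<omega>))"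
    using assms(1-3,5,6) by (auto intro: integrable_continuous_bounded_comp)
  then have "\<bar>(\<integral>\<omega>. \<phi> (Y \<omega>) \<partial>P) - (\<integral>\<omega>. \<phi> (Z \<omega>) \<partial>P)\<bar> \<le> (\<integral>\<omega>. \<Lambda> * \<bar>Y \<omega> - Z \<omega>\<bar> \<partial>P)"
    using assms(7) lipschitz by (intro abs_integral_diff_le) auto
  then show ?thesis by simp
qed

lemma conv_distr_if_cts_step_integral_tendsto:
  fixes Rn :: "nat \<Rightarrow> 'a \<Rightarrow> real" and U :: "'b \<Rightarrow> real"
  assumes "prob_space M" "prob_space N" "\<And>n. Rn n \<in> borel_measurable M" "U \<in> borel_measurable N"
    and "\<And>x y. x < y \<Longrightarrow>
      (\<lambda>n. \<integral>\<omega>. cts_step x y (Rn n \<omega>) \<partial>M) \<longlonglongrightarrow> (\<integral>\<omega>. cts_step x y (U \<omega>) \<partial>N)"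
  shows "conv_distr (\<lambda>n. distr M borel (Rn n)) (distr N borel U)"
proof -
  define \<mu> where "\<mu> n = distr M borel (Rn n)" for n
  define \<nu> where "\<nu> = distr N borel U"
  have \<mu>: "real_distribution (\<mu> n)" for n
    unfolding \<mu>_def using assms(1,3) by (rule prob_space.real_distribution_distr)
  have \<nu>: "real_distribution \<nu>"
    unfolding \<nu>_def using assms(2,4) by (rule prob_space.real_distribution_distr)
  have "weak_conv_m \<mu> \<nu>"
  proof (rule integral_cts_step_conv_imp_weak_conv[OF \<mu> \<nu>])
    fix x y :: real assume "x < y"
    then show "(\<lambda>n. integral\<^sup>L (\<mu> n) (cts_step x y)) \<longlonglongrightarrow> integral\<^sup>L \<nu> (cts_step x y)"
      unfolding \<mu>_def \<nu>_def using assms(3-5)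
        borel_measurable_continuous_onI[OF continuous_cts_step[OF \<open>x < y\<close>]]
      by (simp add: integral_distr)
  qed
  show ?thesis
    unfolding conv_distr_def \<mu>_def[symmetric] \<nu>_def[symmetric]
  proof (intro allI impI, elim conjE)
    fix f :: "real \<Rightarrow> real" assume "continuous_on UNIV f" "bounded (range f)"
    then obtain B where "\<And>x. norm (f x) \<le> B" by (auto simp: bounded_iff)
    with \<open>weak_conv_m \<mu> \<nu>\<close> \<open>continuous_on UNIV f\<close>
    show "(\<lambda>n. integral\<^sup>L (\<mu> n) f) \<longlonglongrightarrow> integral\<^sup>L \<nu> f"
      by (intro weak_conv_imp_integral_bdd_continuous_conv[OF \<mu> \<nu>])
        (auto simp: continuous_on_eq_continuous_at)
  qed
qed

text \<open>Converging together (Billingsley, Theorem 3.2), with closeness measured in \<open>L\<^sup>1\<close>.\<close>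
lemma conv_distr_approx:
  fixes Rn :: "nat \<Rightarrow> 'a \<Rightarrow> real" and U :: "'b \<Rightarrow> real"
  assumes prob: "prob_space M" "prob_space N"
    and meas: "\<And>n. Rn n \<in> borel_measurable M" "U \<in> borel_measurable N"
    and approx: "\<And>\<delta>. \<delta> > 0 \<Longrightarrow> \<exists>Vn V. (\<forall>n. Vn n \<in> borel_measurable M) \<and> V \<in> borel_measurable N \<and>
      conv_distr (\<lambda>n. distr M borel (Vn n)) (distr N borel V) \<and>
      (\<forall>n. integrable M (\<lambda>\<omega>. Rn n \<omega> - Vn n \<omega>)) \<and>
      eventually (\<lambda>n. (\<integral>\<omega>. \<bar>Rn n \<omega> - Vn n \<omega>\<bar> \<partial>M) \<le> \<delta>) sequentially \<and>
      integrable N (\<lambda>\<omega>. U \<omega> - V \<omega>) \<and> (\<integral>\<omega>. \<bar>U \<omega> - V \<omega>\<bar> \<partial>N) \<le> \<delta>"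
  shows "conv_distr (\<lambda>n. distr M borel (Rn n)) (distr N borel U)"
proof (rule conv_distr_if_cts_step_integral_tendsto[OF prob meas])
  fix x y :: real assume "x < y"
  define \<phi> where "\<phi> = cts_step x y"
  define \<Lambda> where "\<Lambda> = 1 / (y - x)"
  have "\<Lambda> > 0" using \<open>x < y\<close> by (simp add: \<Lambda>_def)
  have \<phi>: "continuous_on UNIV \<phi>" "bounded (range \<phi>)" "\<And>a b. \<bar>\<phi> a - \<phi> b\<bar> \<le> \<Lambda> * \<bar>a - b\<bar>"
    unfolding \<phi>_def \<Lambda>_def using continuous_cts_step[OF \<open>x < y\<close>] bounded_range_cts_step
      cts_step_lipschitz[OF \<open>x < y\<close>] by auto
  show "(\<lambda>n. \<integral>\<omega>. \<phi> (Rn n \<omega>) \<partial>M) \<longlonglongrightarrow> (\<integral>\<omega>. \<phi> (U \<omega>) \<partial>N)"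
    unfolding tendsto_iff dist_real_def
  proof (intro allI impI)
    fix \<epsilon> :: real assume "\<epsilon> > 0"
    then obtain Vn V where meas_Vn: "\<And>n. Vn n \<in> borel_measurable M" and meas_V: "V \<in> borel_measurable N"
      and conv_V: "conv_distr (\<lambda>n. distr M borel (Vn n)) (distr N borel V)"
      and int_M: "\<And>n. integrable M (\<lambda>\<omega>. Rn n \<omega> - Vn n \<omega>)"
      and close_M: "eventually (\<lambda>n. (\<integral>\<omega>. \<bar>Rn n \<omega> - Vn n \<omega>\<bar> \<partial>M) \<le> \<epsilon> / (4 * \<Lambda>)) sequentially"
      and int_N: "integrable N (\<lambda>\<omega>. U \<omega> - V \<omega>)"
      and close_N: "(\<integral>\<omega>. \<bar>U \<omega> - V \<omega>\<bar> \<partial>N) \<le> \<epsilon> / (4 * \<Lambda>)"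
      using approx[of "\<epsilon> / (4 * \<Lambda>)"] \<open>\<Lambda> > 0\<close> by auto
    have "(\<lambda>n. \<integral>\<omega>. \<phi> (Vn n \<omega>) \<partial>M) \<longlonglongrightarrow> (\<integral>\<omega>. \<phi> (V \<omega>) \<partial>N)"
      using conv_V \<phi> by (subst (asm) conv_distr_distr_iff[OF meas_Vn meas_V]) auto
    then have "eventually (\<lambda>n. dist (\<integral>\<omega>. \<phi> (Vn n \<omega>) \<partial>M) (\<integral>\<omega>. \<phi> (V \<omega>) \<partial>N) < \<epsilon> / 4) sequentially"
      using \<open>\<epsilon> > 0\<close> by (intro tendstoD) auto
    then have "eventually (\<lambda>n. \<bar>(\<integral>\<omega>. \<phi> (Vn n \<omega>) \<partial>M) - (\<integral>\<omega>. \<phi> (V \<omega>) \<partial>N)\<bar> < \<epsilon> / 4) sequentially"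
      by (simp only: dist_real_def)
    then show "eventually (\<lambda>n. \<bar>(\<integral>\<omega>. \<phi> (Rn n \<omega>) \<partial>M) - (\<integral>\<omega>. \<phi> (U \<omega>) \<partial>N)\<bar> < \<epsilon>) sequentially"
      using close_M
    proof eventually_elim
      case (elim n)
      have "\<bar>(\<integral>\<omega>. \<phi> (Rn n \<omega>) \<partial>M) - (\<integral>\<omega>. \<phi> (Vn n \<omega>) \<partial>M)\<bar> \<le> \<Lambda> * (\<epsilon> / (4 * \<Lambda>))"
        using lipschitz_integral_diff_le[OF prob_space.finite_measure[OF prob(1)] \<phi> meas(1) meas_Vn int_M]
          elim(2) \<open>\<Lambda> > 0\<close> by (meson mult_left_mono order_trans less_imp_le)
      moreover have "\<bar>(\<integral>\<omega>. \<phi> (U \<omega>) \<partial>N) - (\<integral>\<omega>. \<phi> (V \<omega>) \<partial>N)\<bar> \<le> \<Lambda> * (\<epsilon> / (4 * \<Lambda>))"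
        using lipschitz_integral_diff_le[OF prob_space.finite_measure[OF prob(2)] \<phi> meas(2) meas_V int_N]
          close_N \<open>\<Lambda> > 0\<close> by (meson mult_left_mono order_trans less_imp_le)
      moreover have "\<Lambda> * (\<epsilon> / (4 * \<Lambda>)) = \<epsilon> / 4" using \<open>\<Lambda> > 0\<close> by simp
      ultimately show ?case using elim(1) \<open>\<epsilon> > 0\<close> by linarith
    qed
  qed
qed

lemma integral_abs_le_of_second_moment:
  fixes Y :: "'c \<Rightarrow> real"
  assumes "prob_space P" "Y \<in> borel_measurable P" "integrable P (\<lambda>\<omega>. (Y \<omega>)\<^sup>2)"
    and "(\<integral>\<omega>. (Y \<omega>)\<^sup>2 \<partial>P) \<le> \<delta>\<^sup>2" "\<delta> > 0"
  shows "integrable P Y" "(\<integral>\<omega>. \<bar>Y \<omega>\<bar> \<partial>P) \<le> \<delta>"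
proof -
  interpret prob_space P by fact
  show "integrable P Y" using assms(2,3) by (rule square_integrable_imp_integrable)
  text \<open>\<open>|y| \<le> \<delta>/2 + y\<^sup>2/(2\<delta>)\<close> is AM-GM.\<close>
  have "\<bar>y\<bar> \<le> \<delta> / 2 + y\<^sup>2 / (2 * \<delta>)" for y
  proof -
    have "0 \<le> (\<bar>y\<bar> - \<delta>)\<^sup>2" by simp
    then show ?thesis using \<open>\<delta> > 0\<close> by (simp add: field_simps power2_eq_square algebra_simps)
  qed
  then have "(\<integral>\<omega>. \<bar>Y \<omega>\<bar> \<partial>P) \<le> (\<integral>\<omega>. \<delta> / 2 + (Y \<omega>)\<^sup>2 / (2 * \<delta>) \<partial>P)"
    using \<open>integrable P Y\<close> assms(3) by (intro integral_mono) auto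
  also have "\<dots> = \<delta> / 2 + (\<integral>\<omega>. (Y \<omega>)\<^sup>2 \<partial>P) / (2 * \<delta>)"
    using assms(3) by (simp add: prob_space)
  also have "\<dots> \<le> \<delta> / 2 + \<delta>\<^sup>2 / (2 * \<delta>)"
    using assms(4,5) by (simp add: divide_right_mono)
  also have "\<dots> = \<delta>" using \<open>\<delta> > 0\<close> by (simp add: power2_eq_square)
  finally show "(\<integral>\<omega>. \<bar>Y \<omega>\<bar> \<partial>P) \<le> \<delta>" .
qed

section \<open>Trigonometric polynomials\<close>

definition trig_sum :: "('a::real_inner \<times> complex) list \<Rightarrow> 'a \<Rightarrow> complex" where
  "trig_sum L x = (\<Sum>p\<leftarrow>L. snd p * cis (fst p \<bullet> x))"

text \<open>Complex coefficients are used so that products of trigonometric polynomials are again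
  of the same form.\<close>
definition trig_poly :: "('a::real_inner \<Rightarrow> real) \<Rightarrow> bool" where
  "trig_poly h \<longleftrightarrow> (\<exists>L. \<forall>x. complex_of_real (h x) = trig_sum L x)"

lemma trig_sum_Nil [simp]: "trig_sum [] x = 0"
  by (simp add: trig_sum_def)

lemma trig_sum_Cons [simp]: "trig_sum (p # L) x = snd p * cis (fst p \<bullet> x) + trig_sum L x"
  by (simp add: trig_sum_def)

lemma trig_sum_append [simp]: "trig_sum (L @ L') x = trig_sum L x + trig_sum L' x"
  by (simp add: trig_sum_def)

lemma trig_sum_mult:
  "trig_sum L x * trig_sum L' x =
     trig_sum (concat (map (\<lambda>p. map (\<lambda>q. (fst p + fst q, snd p * snd q)) L') L)) x"
proof (induction L)
  case (Cons p L)
  have "trig_sum (map (\<lambda>q. (fst p + fst q, snd p * snd q)) L') x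
      = snd p * cis (fst p \<bullet> x) * trig_sum L' x"
    by (induction L') (simp_all add: inner_add_left cis_mult[symmetric] algebra_simps)
  with Cons show ?case by (simp add: algebra_simps)
qed simp

lemma trig_poly_const: "trig_poly (\<lambda>x. c)"
  unfolding trig_poly_def by (rule exI[of _ "[(0, complex_of_real c)]"]) simp

lemma trig_poly_add: "trig_poly f \<Longrightarrow> trig_poly g \<Longrightarrow> trig_poly (\<lambda>x. f x + g x)"
  unfolding trig_poly_def by (metis of_real_add trig_sum_append)

lemma trig_poly_mult:
  assumes "trig_poly f" "trig_poly g"
  shows "trig_poly (\<lambda>x. f x * g x)"
proof -
  obtain L L' where "\<And>x. complex_of_real (f x) = trig_sum L x" "\<And>x. complex_of_real (g x) = trig_sum L' x"
    using assms unfolding trig_poly_def by blast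
  then show ?thesis
    unfolding trig_poly_def by (auto simp only: of_real_mult trig_sum_mult)
qed

lemma trig_poly_sum:
  "finite A \<Longrightarrow> (\<And>a. a \<in> A \<Longrightarrow> trig_poly (f a)) \<Longrightarrow> trig_poly (\<lambda>x. \<Sum>a\<in>A. f a x)"
  by (induction A rule: finite_induct) (auto intro: trig_poly_add trig_poly_const)

lemma trig_poly_cos: "trig_poly (\<lambda>x. cos (\<tau> \<bullet> x))"
  unfolding trig_poly_def
  by (rule exI[of _ "[(\<tau>, 1/2), (-\<tau>, 1/2)]"]) (simp add: complex_eq_iff)

lemma trig_poly_sin: "trig_poly (\<lambda>x. sin (\<tau> \<bullet> x))"
  unfolding trig_poly_def
  by (rule exI[of _ "[(\<tau>, -\<i>/2), (-\<tau>, \<i>/2)]"]) (simp add: complex_eq_iff)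

lemma trig_poly_eq_ridge_sum:
  assumes "trig_poly h"
  obtains L where "\<And>x. h x = (\<Sum>j<length L. Re (snd (L ! j) * cis (fst (L ! j) \<bullet> x)))"
proof -
  obtain L where L: "\<And>x. complex_of_real (h x) = trig_sum L x"
    using assms unfolding trig_poly_def by blast
  have "h x = (\<Sum>j<length L. Re (snd (L ! j) * cis (fst (L ! j) \<bullet> x)))" for x
    using arg_cong[OF L[of x], of Re]
    by (simp add: trig_sum_def sum_list_sum_nth atLeast0LessThan)
  with that show ?thesis .
qed

lemma trig_poly_continuous:
  assumes "trig_poly h"
  shows "continuous_on UNIV h"
proof -
  obtain L where "\<And>x. h x = (\<Sum>j<length L. Re (snd (L ! j) * cis (fst (L ! j) \<bullet> x)))"
    using trig_poly_eq_ridge_sum[OF assms] by blast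
  then have "h = (\<lambda>x. \<Sum>j<length L. Re (snd (L ! j) * cis (fst (L ! j) \<bullet> x)))" by auto
  then show ?thesis unfolding cis_conv_exp by (simp, intro continuous_intros)
qed

lemma trig_poly_bounded:
  assumes "trig_poly h"
  shows "bounded (range h)"
proof -
  obtain L where L: "\<And>x. h x = (\<Sum>j<length L. Re (snd (L ! j) * cis (fst (L ! j) \<bullet> x)))"
    using trig_poly_eq_ridge_sum[OF assms] by blast
  have "\<bar>h x\<bar> \<le> (\<Sum>j<length L. norm (snd (L ! j)))" for x
    unfolding L
    by (rule order_trans[OF sum_abs sum_mono])
      (metis abs_Re_le_cmod mult.right_neutral norm_cis norm_mult)
  then show ?thesis unfolding bounded_iff by auto
qed

section \<open>Approximation on cubes through the torus\<close>

definition torus_embed :: "real \<Rightarrow> real^'m \<Rightarrow> complex^'m" where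
  "torus_embed a x = (\<chi> i. cis (a * x $ i))"

lemma trig_poly_polynomial_torus_embed:
  fixes g :: "complex^'m \<Rightarrow> real"
  assumes "real_polynomial_function g"
  shows "trig_poly (\<lambda>x. g (torus_embed a x))"
  using assms
proof (induction rule: real_polynomial_function.induct)
  case (linear f)
  have coordinate: "trig_poly (\<lambda>x. torus_embed a x \<bullet> b)" if b: "b \<in> (Basis :: (complex^'m) set)" for b
  proof -
    obtain i u where b_eq: "b = axis i u" and "u \<in> (Basis :: complex set)"
      using b unfolding Basis_vec_def by blast
    then have "u = 1 \<or> u = \<i>" by (simp add: Basis_complex_def)
    then show ?thesis
    proof
      assume "u = 1"
      then have "(\<lambda>x. torus_embed a x \<bullet> b) = (\<lambda>x. cos ((a *\<^sub>R axis i 1) \<bullet> x))"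
        by (auto simp: b_eq torus_embed_def inner_axis inner_axis')
      then show ?thesis using trig_poly_cos by metis
    next
      assume "u = \<i>"
      then have "(\<lambda>x. torus_embed a x \<bullet> b) = (\<lambda>x. sin ((a *\<^sub>R axis i 1) \<bullet> x))"
        by (auto simp: b_eq torus_embed_def inner_axis inner_axis')
      then show ?thesis using trig_poly_sin by metis
    qed
  qed
  have "linear f" using linear bounded_linear.linear by blast
  have "(\<lambda>x. f (torus_embed a x)) = (\<lambda>x. \<Sum>b\<in>Basis. (torus_embed a x \<bullet> b) * f b)"
  proof
    show "f (torus_embed a x) = (\<Sum>b\<in>Basis. (torus_embed a x \<bullet> b) * f b)" for x
      using Linear_Algebra.linear_componentwise[OF \<open>linear f\<close>, of "torus_embed a x" 1] by simp
  qed
  moreover have "trig_poly (\<lambda>x. \<Sum>b\<in>Basis. (torus_embed a x \<bullet> b) * f b)"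
    by (intro trig_poly_sum trig_poly_mult trig_poly_const coordinate) auto
  ultimately show ?case by simp
next
  case (const c)
  show ?case by (rule trig_poly_const)
next
  case (add f g)
  from add.IH show ?case by (rule trig_poly_add)
next
  case (mult f g)
  from mult.IH show ?case by (rule trig_poly_mult)
qed

lemma compact_torus: "compact {z::complex^'m. \<forall>i. norm (z $ i) = 1}"
proof -
  have "closed {z::complex^'m. \<forall>i. norm (z $ i) = 1}"
    using closed_vector_box[of "\<lambda>_. sphere (0::complex) 1"] by simp
  moreover have "{z::complex^'m. \<forall>i. norm (z $ i) = 1} \<subseteq> cball 0 (real CARD('m))"
  proof
    fix z :: "complex^'m" assume "z \<in> {z. \<forall>i. norm (z $ i) = 1}"
    then have "norm z \<le> (\<Sum>i\<in>(UNIV::'m set). 1)"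
      using L2_set_le_sum[of UNIV "\<lambda>i. norm (z $ i)"] by (simp add: norm_vec_def)
    then show "z \<in> cball 0 (real CARD('m))" by simp
  qed
  ultimately show ?thesis
    by (metis bounded_cball bounded_subset compact_eq_bounded_closed)
qed

definition torus_cutoff :: "complex^'m \<Rightarrow> real" where
  "torus_cutoff z = (\<Prod>i\<in>UNIV. min 1 (max 0 (1 + 2 * Re (z $ i))))"

text \<open>A function on the cube \<open>[-\<pi>/(2a), \<pi>/(2a)]\<^sup>m\<close> is transported to the torus through the
  argument map, which is continuous away from the negative real axis; the cutoff vanishes near
  that axis, so the transported function is continuous on the whole torus.\<close>
definition torus_lift :: "real \<Rightarrow> (real^'m \<Rightarrow> real) \<Rightarrow> complex^'m \<Rightarrow> real" where
  "torus_lift a f z = torus_cutoff z * f (\<chi> i. Arg (z $ i) / a)"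

lemma torus_cutoff_bounds: "0 \<le> torus_cutoff z" "torus_cutoff z \<le> 1"
  unfolding torus_cutoff_def by (auto intro: prod_nonneg prod_le_1)

lemma abs_torus_lift_le:
  assumes "\<And>x. \<bar>f x\<bar> \<le> B"
  shows "\<bar>torus_lift a f z\<bar> \<le> B"
proof -
  have "\<bar>torus_lift a f z\<bar> = torus_cutoff z * \<bar>f (\<chi> i. Arg (z $ i) / a)\<bar>"
    using torus_cutoff_bounds(1)[of z] by (simp add: torus_lift_def abs_mult)
  also have "\<dots> \<le> 1 * B"
    using torus_cutoff_bounds assms assms[of 0] by (intro mult_mono) auto
  finally show ?thesis by simp
qed

lemma torus_lift_torus_embed:
  assumes "a > 0" "\<And>i. \<bar>x $ i\<bar> \<le> pi / (2 * a)"
  shows "torus_lift a f (torus_embed a x) = f x"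
proof -
  have angle: "\<bar>a * x $ i\<bar> \<le> pi / 2" for i
    using mult_left_mono[OF assms(2)[of i], of a] assms(1) by (simp add: abs_mult)
  have "Re (torus_embed a x $ i) \<ge> 0" for i
    using angle[of i] by (simp add: torus_embed_def cos_ge_zero abs_le_iff)
  then have "torus_cutoff (torus_embed a x) = 1"
    unfolding torus_cutoff_def by (intro prod.neutral) auto
  moreover have "Arg (torus_embed a x $ i) = a * x $ i" for i
  proof -
    have "-pi < a * x $ i" "a * x $ i \<le> pi"
      using angle[of i] pi_gt_zero unfolding abs_le_iff by linarith+
    then show ?thesis by (simp add: torus_embed_def cis_conv_exp Arg_exp)
  qed
  ultimately show ?thesis using assms(1) by (simp add: torus_lift_def vec_eq_iff)
qed

lemma continuous_on_torus_lift:
  fixes f :: "real^'m \<Rightarrow> real"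
  assumes "a > 0" "continuous_on UNIV f"
  shows "continuous_on {z. \<forall>i. norm (z $ i) = 1} (torus_lift a f)"
proof (rule continuous_at_imp_continuous_on, safe)
  fix z :: "complex^'m" assume torus: "\<forall>i. norm (z $ i) = 1"
  show "isCont (torus_lift a f) z"
  proof (cases "\<exists>i. Re (z $ i) < -1/2")
    case True
    then obtain i where i: "Re (z $ i) < -1/2" by blast
    have vanish: "torus_lift a f w = 0" if "Re (w $ i) < -1/2" for w
    proof -
      have "torus_cutoff w = 0"
        unfolding torus_cutoff_def using that by (intro prod_zero bexI[of _ i]) auto
      then show ?thesis by (simp add: torus_lift_def)
    qed
    have "((\<lambda>w. Re (w $ i)) \<longlongrightarrow> Re (z $ i)) (at z)"
      by (intro tendsto_intros)
    then have "eventually (\<lambda>w. Re (w $ i) < -1/2) (at z)"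
      using i by (rule order_tendstoD(2))
    then have "eventually (\<lambda>w. torus_lift a f w = 0) (at z)"
      by (rule eventually_mono) (rule vanish)
    then have "(torus_lift a f \<longlongrightarrow> 0) (at z)"
      by (rule tendsto_eventually)
    then show ?thesis unfolding isCont_def using vanish[OF i] by simp
  next
    case False
    have "isCont Arg (z $ i)" for i
    proof (rule continuous_at_Arg, rule notI)
      assume "z $ i \<in> \<real>\<^sub>\<le>\<^sub>0"
      then obtain r where r: "z $ i = of_real r" "r \<le> 0" by (rule nonpos_Reals_cases)
      with torus have "r = -1" by (metis abs_of_nonpos norm_of_real minus_minus)
      with r have "Re (z $ i) = -1" by simp
      moreover have "\<not> Re (z $ i) < -1/2" using False by blast
      ultimately show False by simp
    qed
    then have "((\<lambda>w. Arg (w $ i)) \<longlongrightarrow> Arg (z $ i)) (at z)" for i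
      by (rule isCont_tendsto_compose) (intro tendsto_intros)
    then have "isCont (\<lambda>w. \<chi> i. Arg (w $ i) / a) z"
      unfolding isCont_def using assms(1) by (intro tendsto_vec_lambda tendsto_divide tendsto_const) auto
    moreover have "isCont f y" for y
      using assms(2) continuous_on_eq_continuous_at by blast
    ultimately have "isCont (\<lambda>w. f (\<chi> i. Arg (w $ i) / a)) z"
      using continuous_at_compose[unfolded o_def] by blast
    moreover have "isCont (\<lambda>w. Re (w $ i)) z" for i
      unfolding isCont_def by (intro tendsto_intros)
    then have "isCont torus_cutoff z" unfolding torus_cutoff_def by (intro continuous_intros)
    ultimately show ?thesis unfolding torus_lift_def[abs_def] by (intro continuous_intros)
  qed
qed

lemma trig_poly_approx_on_cube:
  fixes f :: "real^'m \<Rightarrow> real"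
  assumes "continuous_on UNIV f" "\<And>x. \<bar>f x\<bar> \<le> B" "L > 0" "\<eta> > 0"
  obtains h where "trig_poly h" "\<And>x. \<bar>h x\<bar> \<le> B + \<eta>"
    "\<And>x. (\<forall>i. \<bar>x $ i\<bar> \<le> L) \<Longrightarrow> \<bar>f x - h x\<bar> < \<eta>"
proof -
  define T where "T = {z::complex^'m. \<forall>i. norm (z $ i) = 1}"
  define a where "a = pi / (2 * L)"
  define G where "G = torus_lift a f"
  have "a > 0" using assms(3) by (simp add: a_def)
  then have "continuous_on T G" and G_bound: "\<And>z. \<bar>G z\<bar> \<le> B"
    and G_eq: "\<And>x. (\<forall>i. \<bar>x $ i\<bar> \<le> L) \<Longrightarrow> G (torus_embed a x) = f x"
    unfolding T_def G_def using assms(1-3)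
    by (auto intro: continuous_on_torus_lift abs_torus_lift_le torus_lift_torus_embed simp: a_def)
  then obtain g where "polynomial_function g" and g_approx: "\<And>z. z \<in> T \<Longrightarrow> norm (G z - g z) < \<eta>"
    using Stone_Weierstrass_polynomial_function[of T G \<eta>] compact_torus \<open>\<eta> > 0\<close>
    unfolding T_def by blast
  have on_torus: "torus_embed a x \<in> T" for x
    by (simp add: T_def torus_embed_def)
  show ?thesis
  proof
    show "trig_poly (\<lambda>x. g (torus_embed a x))"
      using \<open>polynomial_function g\<close>
      by (intro trig_poly_polynomial_torus_embed) (simp add: real_polynomial_function_eq)
    show "\<bar>g (torus_embed a x)\<bar> \<le> B + \<eta>" for x
      using g_approx[of "torus_embed a x"] on_torus[of x] G_bound[of "torus_embed a x"] by auto
    show "\<bar>f x - g (torus_embed a x)\<bar> < \<eta>" if "\<forall>i. \<bar>x $ i\<bar> \<le> L" for x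
      using g_approx[of "torus_embed a x"] on_torus[of x] G_eq[OF that] by simp
  qed
qed

section \<open>The Cramer-Wold device\<close>

definition tail_cutoff :: "real \<Rightarrow> real \<Rightarrow> real" where
  "tail_cutoff L y = min 1 (max 0 (\<bar>y\<bar> - L))"

lemma tail_cutoff_bounds: "0 \<le> tail_cutoff L y" "tail_cutoff L y \<le> 1"
  by (auto simp: tail_cutoff_def)

lemma continuous_tail_cutoff: "continuous_on UNIV (tail_cutoff L)"
  unfolding tail_cutoff_def[abs_def] by (intro continuous_intros)

lemma bounded_range_tail_cutoff: "bounded (range (tail_cutoff L))"
  unfolding bounded_iff using tail_cutoff_bounds by (intro exI[of _ 1]) auto

lemma integral_tail_cutoff_tendsto_zero:
  assumes "finite_measure N" "Y \<in> borel_measurable N"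
  shows "(\<lambda>k. \<integral>\<omega>. tail_cutoff (real k) (Y \<omega>) \<partial>N) \<longlonglongrightarrow> 0"
proof -
  have "(\<lambda>k. \<integral>\<omega>. tail_cutoff (real k) (Y \<omega>) \<partial>N) \<longlonglongrightarrow> (\<integral>\<omega>. 0 \<partial>N)"
  proof (rule integral_dominated_convergence[where w="\<lambda>_. 1"])
    show "(\<lambda>\<omega>. tail_cutoff (real k) (Y \<omega>)) \<in> borel_measurable N" for k
      using assms(2) borel_measurable_continuous_onI[OF continuous_tail_cutoff] by measurable
    show "AE \<omega> in N. (\<lambda>k. tail_cutoff (real k) (Y \<omega>)) \<longlonglongrightarrow> 0"
    proof (rule AE_I2)
      fix \<omega>
      have "eventually (\<lambda>k. tail_cutoff (real k) (Y \<omega>) = 0) sequentially"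
        using eventually_ge_at_top[of "nat \<lceil>\<bar>Y \<omega>\<bar>\<rceil>"]
        by eventually_elim (auto simp: tail_cutoff_def)
      then show "(\<lambda>k. tail_cutoff (real k) (Y \<omega>)) \<longlonglongrightarrow> 0" by (rule tendsto_eventually)
    qed
  qed (use assms(1) tail_cutoff_bounds in \<open>auto simp: finite_measure.integrable_const\<close>)
  then show ?thesis by simp
qed

definition coordinate_tail :: "real \<Rightarrow> real^'m \<Rightarrow> real" where
  "coordinate_tail L x = (\<Sum>i\<in>UNIV. tail_cutoff L (x $ i))"

lemma continuous_coordinate_tail: "continuous_on UNIV (coordinate_tail L)"
  unfolding coordinate_tail_def[abs_def] tail_cutoff_def by (intro continuous_intros)

lemma coordinate_tail_bounds:
  fixes x :: "real^'m"
  shows "0 \<le> coordinate_tail L x" "coordinate_tail L x \<le> CARD('m)"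
proof -
  show "0 \<le> coordinate_tail L x"
    unfolding coordinate_tail_def by (intro sum_nonneg tail_cutoff_bounds)
  have "coordinate_tail L x \<le> (\<Sum>i\<in>(UNIV::'m set). 1)"
    unfolding coordinate_tail_def by (intro sum_mono tail_cutoff_bounds)
  then show "coordinate_tail L x \<le> CARD('m)" by simp
qed

lemma integral_coordinate_tail_tendsto_zero:
  fixes X :: "'b \<Rightarrow> real^'m"
  assumes "finite_measure N" "X \<in> borel_measurable N"
  shows "(\<lambda>k. \<integral>\<omega>. coordinate_tail (real k) (X \<omega>) \<partial>N) \<longlonglongrightarrow> 0"
proof -
  have meas: "(\<lambda>\<omega>. X \<omega> $ i) \<in> borel_measurable N" for i
    using borel_measurable_inner[OF assms(2) borel_measurable_const[of "axis i 1"]]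
    by (simp add: inner_axis)
  then have "(\<integral>\<omega>. coordinate_tail (real k) (X \<omega>) \<partial>N)
      = (\<Sum>i\<in>UNIV. \<integral>\<omega>. tail_cutoff (real k) (X \<omega> $ i) \<partial>N)" for k
    unfolding coordinate_tail_def using assms(1) continuous_tail_cutoff bounded_range_tail_cutoff
    by (subst Bochner_Integration.integral_sum) (auto intro: integrable_continuous_bounded_comp)
  moreover have "(\<lambda>k. \<Sum>i\<in>UNIV. \<integral>\<omega>. tail_cutoff (real k) (X \<omega> $ i) \<partial>N) \<longlonglongrightarrow> (\<Sum>i\<in>(UNIV::'m set). 0)"
    using assms(1) meas by (intro tendsto_sum integral_tail_cutoff_tendsto_zero)
  ultimately show ?thesis by simp
qed

lemma trig_poly_approx_dominated:
  fixes f :: "real^'m \<Rightarrow> real"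
  assumes "continuous_on UNIV f" "\<And>x. \<bar>f x\<bar> \<le> B" "\<eta> > 0" "L \<ge> 0"
  obtains h where "trig_poly h"
    "\<And>x. \<bar>f x - h x\<bar> \<le> \<eta> + (2 * B + \<eta>) * coordinate_tail L x"
proof -
  obtain h where "trig_poly h" and h_bound: "\<And>x. \<bar>h x\<bar> \<le> B + \<eta>"
    and h_approx: "\<And>x. (\<forall>i. \<bar>x $ i\<bar> \<le> L + 1) \<Longrightarrow> \<bar>f x - h x\<bar> < \<eta>"
    using trig_poly_approx_on_cube[OF assms(1,2), of "L + 1" \<eta>] assms(3,4) by auto
  have "\<bar>f x - h x\<bar> \<le> \<eta> + (2 * B + \<eta>) * coordinate_tail L x" for x
  proof (cases "\<forall>i. \<bar>x $ i\<bar> \<le> L + 1")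
    case True
    have "0 \<le> (2 * B + \<eta>) * coordinate_tail L x"
      using assms(2)[of x] assms(3) coordinate_tail_bounds(1) by (intro mult_nonneg_nonneg) auto
    with h_approx[OF True] show ?thesis by linarith
  next
    case False
    then obtain i where "\<bar>x $ i\<bar> > L + 1" by (auto simp: not_le)
    then have "1 \<le> coordinate_tail L x"
      using member_le_sum[of i UNIV "\<lambda>j. tail_cutoff L (x $ j)"] tail_cutoff_bounds
      by (auto simp: tail_cutoff_def coordinate_tail_def)
    then have "2 * B + \<eta> \<le> (2 * B + \<eta>) * coordinate_tail L x"
      using assms(2)[of x] assms(3) by (simp add: mult_le_cancel_left1)
    then show ?thesis using assms(2)[of x] h_bound[of x] assms(3) by linarith
  qed
  with \<open>trig_poly h\<close> that show ?thesis by blast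
qed

context
  fixes M :: "'a measure" and N :: "'b measure"
    and Xn :: "nat \<Rightarrow> 'a \<Rightarrow> real^'m" and X :: "'b \<Rightarrow> real^'m"
  assumes prob_M: "prob_space M" and prob_N: "prob_space N"
    and meas_Xn: "\<And>n. Xn n \<in> borel_measurable M" and meas_X: "X \<in> borel_measurable N"
    and ridge_conv: "\<And>t (g::real \<Rightarrow> real). continuous_on UNIV g \<Longrightarrow> bounded (range g) \<Longrightarrow>
      (\<lambda>n. \<integral>\<omega>. g (t \<bullet> Xn n \<omega>) \<partial>M) \<longlonglongrightarrow> (\<integral>\<omega>. g (t \<bullet> X \<omega>) \<partial>N)"
begin

lemma ridge_sum_integral_tendsto:
  fixes g :: "'i \<Rightarrow> real \<Rightarrow> real"
  assumes "finite I" "\<And>i. i \<in> I \<Longrightarrow> continuous_on UNIV (g i)"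
    "\<And>i. i \<in> I \<Longrightarrow> bounded (range (g i))"
  shows "(\<lambda>n. \<integral>\<omega>. (\<Sum>i\<in>I. g i (t i \<bullet> Xn n \<omega>)) \<partial>M) \<longlonglongrightarrow> (\<integral>\<omega>. (\<Sum>i\<in>I. g i (t i \<bullet> X \<omega>)) \<partial>N)"
proof -
  have integral_sum: "(\<integral>\<omega>. (\<Sum>i\<in>I. g i (t i \<bullet> Y \<omega>)) \<partial>P) = (\<Sum>i\<in>I. \<integral>\<omega>. g i (t i \<bullet> Y \<omega>) \<partial>P)"
    if "prob_space P" "Y \<in> borel_measurable P" for P :: "'z measure" and Y
  proof (rule Bochner_Integration.integral_sum)
    fix i assume "i \<in> I"
    have "(\<lambda>\<omega>. t i \<bullet> Y \<omega>) \<in> borel_measurable P" using that(2) by measurable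
    then show "integrable P (\<lambda>\<omega>. g i (t i \<bullet> Y \<omega>))"
      using that \<open>i \<in> I\<close> assms(2,3) prob_space.finite_measure
      by (intro integrable_continuous_bounded_comp[of P "\<lambda>\<omega>. t i \<bullet> Y \<omega>" "g i"]) auto
  qed
  show ?thesis
    unfolding integral_sum[OF prob_M meas_Xn] integral_sum[OF prob_N meas_X]
    using assms by (intro tendsto_sum ridge_conv) auto
qed

lemma trig_poly_integral_tendsto:
  assumes "trig_poly h"
  shows "(\<lambda>n. \<integral>\<omega>. h (Xn n \<omega>) \<partial>M) \<longlonglongrightarrow> (\<integral>\<omega>. h (X \<omega>) \<partial>N)"
proof -
  obtain L where L: "\<And>x. h x = (\<Sum>j<length L. Re (snd (L ! j) * cis (fst (L ! j) \<bullet> x)))"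
    using trig_poly_eq_ridge_sum[OF assms] by blast
  have "\<bar>Re (c * cis y)\<bar> \<le> norm c" for c y
    using abs_Re_le_cmod[of "c * cis y"] by (simp add: norm_mult)
  then have "bounded (range (\<lambda>y. Re (c * cis y)))" for c
    unfolding bounded_iff by (intro exI[of _ "norm c"]) auto
  then show ?thesis
    unfolding L
    by (intro ridge_sum_integral_tendsto[where g="\<lambda>j y. Re (snd (L ! j) * cis y)"])
      (auto simp: cis_conv_exp intro!: continuous_intros)
qed

lemma coordinate_tail_integral_tendsto:
  "(\<lambda>n. \<integral>\<omega>. coordinate_tail L (Xn n \<omega>) \<partial>M) \<longlonglongrightarrow> (\<integral>\<omega>. coordinate_tail L (X \<omega>) \<partial>N)"
proof -
  have "coordinate_tail L x = (\<Sum>i\<in>UNIV. tail_cutoff L (axis i 1 \<bullet> x))" for x :: "real^'m"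
    by (simp add: coordinate_tail_def inner_axis')
  moreover have "(\<lambda>n. \<integral>\<omega>. (\<Sum>i\<in>UNIV. tail_cutoff L (axis i 1 \<bullet> Xn n \<omega>)) \<partial>M)
      \<longlonglongrightarrow> (\<integral>\<omega>. (\<Sum>i\<in>UNIV. tail_cutoff L (axis i 1 \<bullet> X \<omega>)) \<partial>N)"
    using continuous_tail_cutoff bounded_range_tail_cutoff by (intro ridge_sum_integral_tendsto) auto
  ultimately show ?thesis by simp
qed

lemma bounded_continuous_integral_tendsto:
  fixes f :: "real^'m \<Rightarrow> real"
  assumes cont_f: "continuous_on UNIV f" and bound_f: "\<And>x. \<bar>f x\<bar> \<le> B"
  shows "(\<lambda>n. \<integral>\<omega>. f (Xn n \<omega>) \<partial>M) \<longlonglongrightarrow> (\<integral>\<omega>. f (X \<omega>) \<partial>N)"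
  unfolding tendsto_iff dist_real_def
proof (intro allI impI)
  fix \<epsilon> :: real assume "\<epsilon> > 0"
  define \<eta> where "\<eta> = \<epsilon> / 8"
  define K where "K = 2 * B + \<eta>"
  have "\<eta> > 0" "K \<ge> 0" using \<open>\<epsilon> > 0\<close> bound_f[of 0] by (auto simp: \<eta>_def K_def)
  then obtain k where "(\<integral>\<omega>. coordinate_tail (real k) (X \<omega>) \<partial>N) < \<eta> / (K + 1)"
    using order_tendstoD(2)[OF integral_coordinate_tail_tendsto_zero[OF _ meas_X], of "\<eta> / (K + 1)"]
      prob_N by (auto simp: eventually_sequentially prob_space.finite_measure)
  then have "K * (\<integral>\<omega>. coordinate_tail (real k) (X \<omega>) \<partial>N) \<le> K * (\<eta> / (K + 1))"
    using \<open>K \<ge> 0\<close> by (intro mult_left_mono) auto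
  also have "\<dots> \<le> \<eta>"
    using \<open>K \<ge> 0\<close> \<open>\<eta> > 0\<close> by (simp add: divide_le_eq)
  finally have tail_X: "K * (\<integral>\<omega>. coordinate_tail (real k) (X \<omega>) \<partial>N) \<le> \<eta>" .
  obtain h where "trig_poly h" and dominated: "\<And>x. \<bar>f x - h x\<bar> \<le> \<eta> + K * coordinate_tail (real k) x"
    using trig_poly_approx_dominated[OF cont_f bound_f \<open>\<eta> > 0\<close>, of "real k"] by (auto simp: K_def)
  have "\<bar>K * coordinate_tail (real k) x\<bar> \<le> K * CARD('m)" for x :: "real^'m"
    using coordinate_tail_bounds[of "real k" x] \<open>K \<ge> 0\<close> by (simp add: abs_mult mult_left_mono)
  then have "bounded (range (\<lambda>x::real^'m. K * coordinate_tail (real k) x))"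
    unfolding bounded_iff by auto
  moreover have "continuous_on UNIV (\<lambda>x::real^'m. K * coordinate_tail (real k) x)"
    using continuous_coordinate_tail by (intro continuous_intros)
  moreover have "bounded (range f)" using bound_f unfolding bounded_iff by auto
  ultimately have integral_bound: "\<bar>(\<integral>\<omega>. f (Y \<omega>) \<partial>P) - (\<integral>\<omega>. h (Y \<omega>) \<partial>P)\<bar>
      \<le> \<eta> + K * (\<integral>\<omega>. coordinate_tail (real k) (Y \<omega>) \<partial>P)"
    if "prob_space P" "Y \<in> borel_measurable P" for P :: "'z measure" and Y
    using abs_integral_comp_diff_le[OF that cont_f _ trig_poly_continuous[OF \<open>trig_poly h\<close>]
        trig_poly_bounded[OF \<open>trig_poly h\<close>] _ _ dominated]
    by simp
  have "(\<lambda>n. K * (\<integral>\<omega>. coordinate_tail (real k) (Xn n \<omega>) \<partial>M))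
      \<longlonglongrightarrow> K * (\<integral>\<omega>. coordinate_tail (real k) (X \<omega>) \<partial>N)"
    by (intro tendsto_mult_left coordinate_tail_integral_tendsto)
  then have "eventually (\<lambda>n. K * (\<integral>\<omega>. coordinate_tail (real k) (Xn n \<omega>) \<partial>M) < 2 * \<eta>) sequentially"
    using tail_X \<open>\<eta> > 0\<close> by (intro order_tendstoD(2)) auto
  moreover have "eventually (\<lambda>n. \<bar>(\<integral>\<omega>. h (Xn n \<omega>) \<partial>M) - (\<integral>\<omega>. h (X \<omega>) \<partial>N)\<bar> < \<eta>) sequentially"
    using trig_poly_integral_tendsto[OF \<open>trig_poly h\<close>] \<open>\<eta> > 0\<close>
    unfolding tendsto_iff dist_real_def by blast
  ultimately show "eventually (\<lambda>n. \<bar>(\<integral>\<omega>. f (Xn n \<omega>) \<partial>M) - (\<integral>\<omega>. f (X \<omega>) \<partial>N)\<bar> < \<epsilon>) sequentially"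
  proof eventually_elim
    case (elim n)
    with integral_bound[OF prob_M meas_Xn, of n] integral_bound[OF prob_N meas_X] tail_X
    show ?case unfolding \<eta>_def by linarith
  qed
qed

end

theorem cramer_wold:
  fixes Xn :: "nat \<Rightarrow> 'a \<Rightarrow> real^'m" and X :: "'b \<Rightarrow> real^'m"
  assumes "prob_space M" "prob_space N" "\<And>n. Xn n \<in> borel_measurable M" "X \<in> borel_measurable N"
    and "\<And>t. conv_distr (\<lambda>n. distr M borel (\<lambda>\<omega>. t \<bullet> Xn n \<omega>)) (distr N borel (\<lambda>\<omega>. t \<bullet> X \<omega>))"
  shows "conv_distr (\<lambda>n. distr M borel (Xn n)) (distr N borel X)"
proof -
  have "(\<lambda>n. \<integral>\<omega>. g (t \<bullet> Xn n \<omega>) \<partial>M) \<longlonglongrightarrow> (\<integral>\<omega>. g (t \<bullet> X \<omega>) \<partial>N)"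
    if "continuous_on UNIV g" "bounded (range g)" for t and g :: "real \<Rightarrow> real"
    using assms(5)[of t] that assms(3,4) by (subst (asm) conv_distr_distr_iff) auto
  then show ?thesis
    using assms(1-4)
    by (subst conv_distr_distr_iff) (auto simp: bounded_iff intro: bounded_continuous_integral_tendsto)
qed

section \<open>The class of piecewise continuous functions\<close>

lemma pwCI:
  assumes "finite \<H>" "\<And>H. H \<in> \<H> \<Longrightarrow> hyperplane H" "\<And>x. x \<notin> \<Union>\<H> \<Longrightarrow> isCont \<phi> x"
    "\<And>x. \<bar>\<phi> x\<bar> \<le> B" "\<And>x. \<phi> x \<noteq> 0 \<Longrightarrow> norm x \<le> R"
  shows "\<phi> \<in> pwC"
proof -
  have "bounded (range \<phi>)" "bounded {x. \<phi> x \<noteq> 0}"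
    using assms(4,5) unfolding bounded_iff by auto
  with assms(1-3) show ?thesis unfolding pwC_def by blast
qed

lemma pwC_piecewise_continuous:
  assumes "\<phi> \<in> pwC"
  obtains \<H> where "finite \<H>" "\<And>H. H \<in> \<H> \<Longrightarrow> hyperplane H" "\<And>x. x \<notin> \<Union>\<H> \<Longrightarrow> isCont \<phi> x"
  using assms unfolding pwC_def by blast

lemma pwC_bounded_range: "\<phi> \<in> pwC \<Longrightarrow> bounded (range \<phi>)"
  and pwC_bounded_support: "\<phi> \<in> pwC \<Longrightarrow> bounded {x. \<phi> x \<noteq> 0}"
  unfolding pwC_def by blast+

lemma pwC_bounded:
  assumes "\<phi> \<in> pwC"
  obtains B R where "\<And>x. \<bar>\<phi> x\<bar> \<le> B" "\<And>x. \<phi> x \<noteq> 0 \<Longrightarrow> norm x \<le> R"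
  using pwC_bounded_range[OF assms] pwC_bounded_support[OF assms] that
  unfolding bounded_iff by auto

lemma pwC_add:
  assumes "\<phi> \<in> pwC" "\<psi> \<in> pwC"
  shows "(\<lambda>x. \<phi> x + \<psi> x) \<in> pwC"
proof -
  obtain \<H>\<^sub>1 where \<phi>: "finite \<H>\<^sub>1" "\<And>H. H \<in> \<H>\<^sub>1 \<Longrightarrow> hyperplane H"
    "\<And>x. x \<notin> \<Union>\<H>\<^sub>1 \<Longrightarrow> isCont \<phi> x"
    using pwC_piecewise_continuous[OF assms(1)] by blast
  obtain B\<^sub>1 R\<^sub>1 where \<phi>_bound: "\<And>x. \<bar>\<phi> x\<bar> \<le> B\<^sub>1" "\<And>x. \<phi> x \<noteq> 0 \<Longrightarrow> norm x \<le> R\<^sub>1"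
    using pwC_bounded[OF assms(1)] by blast
  obtain \<H>\<^sub>2 where \<psi>: "finite \<H>\<^sub>2" "\<And>H. H \<in> \<H>\<^sub>2 \<Longrightarrow> hyperplane H"
    "\<And>x. x \<notin> \<Union>\<H>\<^sub>2 \<Longrightarrow> isCont \<psi> x"
    using pwC_piecewise_continuous[OF assms(2)] by blast
  obtain B\<^sub>2 R\<^sub>2 where \<psi>_bound: "\<And>x. \<bar>\<psi> x\<bar> \<le> B\<^sub>2" "\<And>x. \<psi> x \<noteq> 0 \<Longrightarrow> norm x \<le> R\<^sub>2"
    using pwC_bounded[OF assms(2)] by blast
  show ?thesis
  proof (rule pwCI[of "\<H>\<^sub>1 \<union> \<H>\<^sub>2" _ "B\<^sub>1 + B\<^sub>2" "max R\<^sub>1 R\<^sub>2"])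
    fix x
    show "\<bar>\<phi> x + \<psi> x\<bar> \<le> B\<^sub>1 + B\<^sub>2" using \<phi>_bound(1)[of x] \<psi>_bound(1)[of x] by linarith
    show "\<phi> x + \<psi> x \<noteq> 0 \<Longrightarrow> norm x \<le> max R\<^sub>1 R\<^sub>2" using \<phi>_bound(2)[of x] \<psi>_bound(2)[of x] by force
    show "x \<notin> \<Union>(\<H>\<^sub>1 \<union> \<H>\<^sub>2) \<Longrightarrow> isCont (\<lambda>x. \<phi> x + \<psi> x) x"
      using \<phi>(3) \<psi>(3) by (auto intro: continuous_intros)
  qed (use \<phi> \<psi> in auto)
qed

lemma pwC_mult:
  assumes "\<phi> \<in> pwC" "\<psi> \<in> pwC"
  shows "(\<lambda>x. \<phi> x * \<psi> x) \<in> pwC"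
proof -
  obtain \<H>\<^sub>1 where \<phi>: "finite \<H>\<^sub>1" "\<And>H. H \<in> \<H>\<^sub>1 \<Longrightarrow> hyperplane H"
    "\<And>x. x \<notin> \<Union>\<H>\<^sub>1 \<Longrightarrow> isCont \<phi> x"
    using pwC_piecewise_continuous[OF assms(1)] by blast
  obtain B\<^sub>1 R\<^sub>1 where \<phi>_bound: "\<And>x. \<bar>\<phi> x\<bar> \<le> B\<^sub>1" "\<And>x. \<phi> x \<noteq> 0 \<Longrightarrow> norm x \<le> R\<^sub>1"
    using pwC_bounded[OF assms(1)] by blast
  obtain \<H>\<^sub>2 where \<psi>: "finite \<H>\<^sub>2" "\<And>H. H \<in> \<H>\<^sub>2 \<Longrightarrow> hyperplane H"
    "\<And>x. x \<notin> \<Union>\<H>\<^sub>2 \<Longrightarrow> isCont \<psi> x"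
    using pwC_piecewise_continuous[OF assms(2)] by blast
  obtain B\<^sub>2 R\<^sub>2 where \<psi>_bound: "\<And>x. \<bar>\<psi> x\<bar> \<le> B\<^sub>2" "\<And>x. \<psi> x \<noteq> 0 \<Longrightarrow> norm x \<le> R\<^sub>2"
    using pwC_bounded[OF assms(2)] by blast
  show ?thesis
  proof (rule pwCI[of "\<H>\<^sub>1 \<union> \<H>\<^sub>2" _ "B\<^sub>1 * B\<^sub>2" R\<^sub>1])
    fix x
    show "\<bar>\<phi> x * \<psi> x\<bar> \<le> B\<^sub>1 * B\<^sub>2"
      unfolding abs_mult using \<phi>_bound(1)[of x] \<psi>_bound(1)[of x] by (intro mult_mono) auto
    show "\<phi> x * \<psi> x \<noteq> 0 \<Longrightarrow> norm x \<le> R\<^sub>1" using \<phi>_bound(2)[of x] by force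
    show "x \<notin> \<Union>(\<H>\<^sub>1 \<union> \<H>\<^sub>2) \<Longrightarrow> isCont (\<lambda>x. \<phi> x * \<psi> x) x"
      using \<phi>(3) \<psi>(3) by (auto intro: continuous_intros)
  qed (use \<phi> \<psi> in auto)
qed

lemma pwC_scale:
  assumes "\<phi> \<in> pwC"
  shows "(\<lambda>x. c * \<phi> x) \<in> pwC"
proof -
  obtain \<H> where \<phi>: "finite \<H>" "\<And>H. H \<in> \<H> \<Longrightarrow> hyperplane H"
    "\<And>x. x \<notin> \<Union>\<H> \<Longrightarrow> isCont \<phi> x"
    using pwC_piecewise_continuous[OF assms] by blast
  obtain B R where \<phi>_bound: "\<And>x. \<bar>\<phi> x\<bar> \<le> B" "\<And>x. \<phi> x \<noteq> 0 \<Longrightarrow> norm x \<le> R"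
    using pwC_bounded[OF assms] by blast
  show ?thesis
  proof (rule pwCI[of \<H> _ "\<bar>c\<bar> * B" R])
    fix x
    show "\<bar>c * \<phi> x\<bar> \<le> \<bar>c\<bar> * B" unfolding abs_mult using \<phi>_bound(1)[of x] by (rule mult_left_mono) simp
    show "c * \<phi> x \<noteq> 0 \<Longrightarrow> norm x \<le> R" using \<phi>_bound(2)[of x] by force
    show "x \<notin> \<Union>\<H> \<Longrightarrow> isCont (\<lambda>x. c * \<phi> x) x" using \<phi>(3) by (auto intro: continuous_intros)
  qed (use \<phi> in auto)
qed

lemma pwC_diff: "\<phi> \<in> pwC \<Longrightarrow> \<psi> \<in> pwC \<Longrightarrow> (\<lambda>x. \<phi> x - \<psi> x) \<in> pwC"
  using pwC_add[OF _ pwC_scale[of \<psi> "-1"], of \<phi>] by simp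

lemma pwC_sum: "finite A \<Longrightarrow> (\<And>a. a \<in> A \<Longrightarrow> f a \<in> pwC) \<Longrightarrow> (\<lambda>x. \<Sum>a\<in>A. f a x) \<in> pwC"
proof (induction A rule: finite_induct)
  case empty
  show ?case by (rule pwCI[of "{}" _ 0 0]) auto
qed (simp add: pwC_add)

lemma null_sets_Union_hyperplanes:
  fixes \<H> :: "'a::euclidean_space set set"
  assumes "finite \<H>" "\<And>H. H \<in> \<H> \<Longrightarrow> hyperplane H"
  shows "\<Union>\<H> \<in> null_sets lebesgue"
proof -
  have "H \<in> null_sets lebesgue" if "H \<in> \<H>" for H
    using assms(2)[OF that] negligible_hyperplane negligible_iff_null_sets
    unfolding hyperplane_def by blast
  with assms(1) show ?thesis
    using null_sets_UN'[of \<H> "\<lambda>H. H" lebesgue] by (auto intro: countable_finite)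
qed

lemma pwC_AE_isCont:
  assumes "\<phi> \<in> pwC"
  shows "AE x in lebesgue. isCont \<phi> x"
proof -
  obtain \<H> where "finite \<H>" "\<And>H. H \<in> \<H> \<Longrightarrow> hyperplane H"
    and cont: "\<And>x. x \<notin> \<Union>\<H> \<Longrightarrow> isCont \<phi> x"
    using pwC_piecewise_continuous[OF assms] by blast
  then have "AE x in lebesgue. x \<notin> \<Union>\<H>"
    by (intro AE_not_in null_sets_Union_hyperplanes)
  then show ?thesis by eventually_elim (rule cont)
qed

lemma pwC_borel_measurable:
  assumes "\<phi> \<in> pwC"
  shows "\<phi> \<in> borel_measurable lebesgue"
proof -
  obtain \<H> where "finite \<H>" and hyperplanes: "\<And>H. H \<in> \<H> \<Longrightarrow> hyperplane H"
    and cont: "\<And>x. x \<notin> \<Union>\<H> \<Longrightarrow> isCont \<phi> x"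
    using pwC_piecewise_continuous[OF assms] by blast
  have "closed H" if "H \<in> \<H>" for H
    using hyperplanes[OF that] closed_hyperplane unfolding hyperplane_def by blast
  with \<open>finite \<H>\<close> have "closed (\<Union>\<H>)" by (intro closed_Union) auto
  moreover have "continuous_on (- \<Union>\<H>) \<phi>"
    using cont by (intro continuous_at_imp_continuous_on) auto
  ultimately have "(\<lambda>x. indicator (- \<Union>\<H>) x *\<^sub>R \<phi> x) \<in> borel_measurable borel"
    by (intro borel_measurable_continuous_on_indicator) auto
  then have "(\<lambda>x. indicator (- \<Union>\<H>) x *\<^sub>R \<phi> x) \<in> borel_measurable lebesgue"
    by (intro measurable_completion) simp
  moreover have "AE x in lebesgue. x \<notin> \<Union>\<H>"
    using \<open>finite \<H>\<close> hyperplanes by (intro AE_not_in null_sets_Union_hyperplanes)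
  then have "AE x in lebesgue. indicator (- \<Union>\<H>) x *\<^sub>R \<phi> x = \<phi> x"
    by eventually_elim simp
  ultimately show ?thesis by (rule borel_measurable_AE)
qed

lemma pwC_integrable:
  assumes "\<phi> \<in> pwC"
  shows "integrable lebesgue \<phi>"
proof -
  obtain B R where B: "\<And>x. \<bar>\<phi> x\<bar> \<le> B" and R: "\<And>x. \<phi> x \<noteq> 0 \<Longrightarrow> norm x \<le> R"
    using pwC_bounded[OF assms] by blast
  have "integrable lebesgue (indicator (cball (0::'a) R) :: 'a \<Rightarrow> real)"
    using emeasure_lborel_cball_finite[of "0::'a" R] by (simp add: integrable_completion)
  then have "integrable lebesgue (\<lambda>x. B * indicator (cball (0::'a) R) x)" by simp
  then show ?thesis
  proof (rule Bochner_Integration.integrable_bound[OF _ pwC_borel_measurable[OF assms]])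
    show "AE x in lebesgue. norm (\<phi> x) \<le> norm (B * indicator (cball 0 R) x)"
    proof (rule AE_I2)
      fix x :: 'a
      show "norm (\<phi> x) \<le> norm (B * indicator (cball 0 R) x)"
        using B[of x] R[of x] by (cases "\<phi> x = 0") (auto simp: indicator_def)
    qed
  qed
qed

lemma pwC_L2: "\<phi> \<in> pwC \<Longrightarrow> \<phi> \<in> L2"
  unfolding L2_def power2_eq_square
  by (blast intro: pwC_borel_measurable pwC_integrable pwC_mult)

lemma L2_dense_inE:
  assumes "L2_dense_in D C" "\<phi> \<in> C" "r > 0"
  obtains \<psi> where "\<psi> \<in> D" "\<psi> \<in> C" "(\<integral>x. (\<phi> x - \<psi> x)\<^sup>2 \<partial>lebesgue) < r"
proof -
  obtain \<psi> where "\<psi> \<in> D" "L2_dist \<phi> \<psi> < sqrt r"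
    using assms real_sqrt_gt_zero[OF assms(3)] unfolding L2_dense_in_def by blast
  moreover from this(1) have "\<psi> \<in> C" using assms(1) unfolding L2_dense_in_def by blast
  ultimately show ?thesis using that by (simp add: L2_dist_def)
qed

section \<open>Riemann sums over the lattice \<open>\<int>\<^sup>d/n\<close>\<close>

definition lattice_support :: "nat \<Rightarrow> (real^'d \<Rightarrow> real) \<Rightarrow> (int^'d) set" where
  "lattice_support n \<phi> = {k. \<phi> (lattice_pt n k) \<noteq> 0}"

lemma lattice_pt_nth [simp]: "lattice_pt n k $ i = real_of_int (k $ i) / real n"
  by (simp add: lattice_pt_def)

lemma finite_lattice_support:
  assumes "bounded {x. \<phi> x \<noteq> 0}" "n > 0"
  shows "finite (lattice_support n \<phi>)"
proof -
  obtain R where R: "\<And>x. \<phi> x \<noteq> 0 \<Longrightarrow> norm x \<le> R"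
    using assms(1) unfolding bounded_iff by auto
  define N where "N = \<lceil>real n * R\<rceil>"
  have "lattice_support n \<phi> \<subseteq> vec_lambda ` (PiE UNIV (\<lambda>_. {-N..N}))"
  proof
    fix k assume "k \<in> lattice_support n \<phi>"
    then have "norm (lattice_pt n k) \<le> R" using R by (auto simp: lattice_support_def)
    then have "\<bar>real_of_int (k $ i)\<bar> / real n \<le> R" for i
      using component_le_norm_cart[of "lattice_pt n k" i] by (simp add: abs_divide)
    then have k_bound: "\<bar>k $ i\<bar> \<le> N" for i
    proof -
      have "real_of_int \<bar>k $ i\<bar> \<le> real n * R"
        using \<open>\<bar>real_of_int (k $ i)\<bar> / real n \<le> R\<close> assms(2) by (simp add: divide_le_eq mult.commute)
      also have "\<dots> \<le> real_of_int N" unfolding N_def by (rule le_of_int_ceiling)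
      finally show ?thesis by (simp only: of_int_le_iff)
    qed
    have "k $ i \<in> {-N..N}" for i using k_bound[of i] by (simp add: abs_le_iff)
    then have "(\<lambda>i. k $ i) \<in> PiE UNIV (\<lambda>_. {-N..N})" by auto
    then show "k \<in> vec_lambda ` (PiE UNIV (\<lambda>_. {-N..N}))"
      by (metis (no_types) image_eqI vector_component_simps(1) vec_lambda_eta)
  qed
  then show ?thesis by (rule finite_subset) (intro finite_imageI finite_PiE; simp)
qed

definition lattice_floor :: "nat \<Rightarrow> real^'d \<Rightarrow> int^'d" where
  "lattice_floor n x = (\<chi> i. \<lfloor>real n * x $ i\<rfloor>)"

definition lattice_cell :: "nat \<Rightarrow> int^'d \<Rightarrow> (real^'d) set" where
  "lattice_cell n k = {x. \<forall>i. \<lfloor>real n * x $ i\<rfloor> = k $ i}"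

lemma lattice_floor_eq_iff: "lattice_floor n x = k \<longleftrightarrow> x \<in> lattice_cell n k"
  by (auto simp: lattice_floor_def lattice_cell_def vec_eq_iff)

lemma lattice_cell_sets [measurable]: "lattice_cell n k \<in> sets borel"
  unfolding lattice_cell_def by measurable

lemma norm_diff_lattice_floor_le:
  fixes x :: "real^'d"
  assumes "n > 0"
  shows "norm (x - lattice_pt n (lattice_floor n x)) \<le> CARD('d) / real n"
proof -
  have coordinate: "\<bar>(x - lattice_pt n (lattice_floor n x)) $ i\<bar> \<le> 1 / real n" for i
  proof -
    have "x $ i - lattice_pt n (lattice_floor n x) $ i
        = (real n * x $ i - real_of_int \<lfloor>real n * x $ i\<rfloor>) / real n"
      using assms by (simp add: lattice_floor_def diff_divide_distrib)
    moreover have "0 \<le> real n * x $ i - real_of_int \<lfloor>real n * x $ i\<rfloor>"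
      "real n * x $ i - real_of_int \<lfloor>real n * x $ i\<rfloor> \<le> 1" by linarith+
    ultimately show ?thesis using assms by (simp add: divide_right_mono)
  qed
  have "(\<Sum>i\<in>UNIV. \<bar>(x - lattice_pt n (lattice_floor n x)) $ i\<bar>) \<le> (\<Sum>i\<in>(UNIV::'d set). 1 / real n)"
    by (rule sum_mono) (rule coordinate)
  then have "norm (x - lattice_pt n (lattice_floor n x)) \<le> (\<Sum>i\<in>(UNIV::'d set). 1 / real n)"
    using norm_le_l1_cart order_trans by blast
  then show ?thesis by simp
qed

lemma measure_lattice_cell:
  fixes k :: "int^'d"
  assumes "n > 0"
  shows "measure lborel (lattice_cell n k) = (1 / real n) ^ CARD('d)"
proof -
  define a :: "real^'d" where "a = (\<chi> i. real_of_int (k $ i) / real n)"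
  define b :: "real^'d" where "b = (\<chi> i. (real_of_int (k $ i) + 1) / real n)"
  have box: "box a b \<subseteq> lattice_cell n k"
  proof
    fix x assume "x \<in> box a b"
    then have "real_of_int (k $ i) < real n * x $ i \<and> real n * x $ i < real_of_int (k $ i) + 1" for i
      using assms by (auto simp: mem_box_cart a_def b_def field_simps)
    then show "x \<in> lattice_cell n k" by (simp add: lattice_cell_def floor_eq_iff less_imp_le)
  qed
  have cbox: "lattice_cell n k \<subseteq> cbox a b"
  proof
    fix x assume "x \<in> lattice_cell n k"
    then have "real_of_int (k $ i) \<le> real n * x $ i \<and> real n * x $ i \<le> real_of_int (k $ i) + 1" for i
      by (simp add: lattice_cell_def) (metis floor_correct less_imp_le of_int_add of_int_1)
    then show "x \<in> cbox a b"
      using assms by (auto simp: mem_box_cart a_def b_def field_simps)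
  qed
  have "\<forall>\<beta>\<in>Basis. a \<bullet> \<beta> \<le> b \<bullet> \<beta>"
    using assms by (auto simp: Basis_vec_def a_def b_def inner_axis divide_right_mono)
  moreover have "(\<Prod>\<beta>\<in>Basis. (b - a) \<bullet> \<beta>) = (\<Prod>\<beta>\<in>(Basis::(real^'d) set). 1 / real n)"
    by (intro prod.cong) (auto simp: Basis_vec_def a_def b_def inner_axis diff_divide_distrib[symmetric])
  moreover have "emeasure lborel (lattice_cell n k) \<le> emeasure lborel (cbox a b)"
    using cbox by (intro emeasure_mono) auto
  then have "lattice_cell n k \<in> fmeasurable lborel"
    using emeasure_lborel_cbox_finite[of a b] by (intro fmeasurableI) auto
  moreover have "measure lborel (box a b) \<le> measure lborel (lattice_cell n k)"
    using box \<open>lattice_cell n k \<in> fmeasurable lborel\<close> by (intro measure_mono_fmeasurable) auto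
  moreover have "measure lborel (lattice_cell n k) \<le> measure lborel (cbox a b)"
    using cbox by (intro measure_mono_fmeasurable) auto
  ultimately show ?thesis by (simp add: measure_lborel_box_eq measure_lborel_cbox_eq)
qed

lemma lattice_step_eq_sum:
  assumes "finite (lattice_support n g)"
  shows "g (lattice_pt n (lattice_floor n x))
    = (\<Sum>k\<in>lattice_support n g. g (lattice_pt n k) * indicator (lattice_cell n k) x)"
proof -
  have "(\<Sum>k\<in>lattice_support n g. g (lattice_pt n k) * indicator (lattice_cell n k) x)
      = (\<Sum>k\<in>lattice_support n g. if lattice_floor n x = k then g (lattice_pt n k) else 0)"
    by (intro sum.cong) (auto simp: indicator_def lattice_floor_eq_iff)
  also have "\<dots> = g (lattice_pt n (lattice_floor n x))"
    using assms by (auto simp: sum.delta lattice_support_def)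
  finally show ?thesis by simp
qed

lemma lattice_step_integral:
  fixes g :: "real^'d \<Rightarrow> real"
  assumes "finite (lattice_support n g)" "n > 0"
  shows "(\<lambda>x. g (lattice_pt n (lattice_floor n x))) \<in> borel_measurable lebesgue"
    and "integral\<^sup>L lebesgue (\<lambda>x. g (lattice_pt n (lattice_floor n x)))
      = (\<Sum>k\<in>lattice_support n g. g (lattice_pt n k)) / real n ^ CARD('d)"
proof -
  let ?step = "\<lambda>x. \<Sum>k\<in>lattice_support n g. g (lattice_pt n k) * indicator (lattice_cell n k) x"
  have step_eq: "(\<lambda>x. g (lattice_pt n (lattice_floor n x))) = ?step"
    using lattice_step_eq_sum[OF assms(1)] by auto
  have "?step \<in> borel_measurable borel" by measurable
  then show "(\<lambda>x. g (lattice_pt n (lattice_floor n x))) \<in> borel_measurable lebesgue"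
    unfolding step_eq by (intro measurable_completion) simp
  have finite_cell: "emeasure lborel (lattice_cell n k) < \<infinity>" for k :: "int^'d"
    using emeasure_eq_ennreal_measure[of lborel "lattice_cell n k"]
      measure_lattice_cell[OF assms(2), of k] assms(2)
    by (cases "emeasure lborel (lattice_cell n k) = \<top>") (auto simp: measure_def)
  have "integral\<^sup>L lebesgue ?step = integral\<^sup>L lborel ?step"
    using \<open>?step \<in> borel_measurable borel\<close> by (intro integral_completion) simp
  also have "\<dots> = (\<Sum>k\<in>lattice_support n g. g (lattice_pt n k) * measure lborel (lattice_cell n k))"
    using finite_cell by (subst Bochner_Integration.integral_sum) (auto intro: integrable_real_indicator)
  also have "\<dots> = (\<Sum>k\<in>lattice_support n g. g (lattice_pt n k)) / real n ^ CARD('d)"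
    using assms(2) by (simp add: measure_lattice_cell sum_divide_distrib power_one_over)
  finally show "integral\<^sup>L lebesgue (\<lambda>x. g (lattice_pt n (lattice_floor n x)))
      = (\<Sum>k\<in>lattice_support n g. g (lattice_pt n k)) / real n ^ CARD('d)"
    unfolding step_eq .
qed

lemma lattice_pt_floor_tendsto:
  fixes x :: "real^'d"
  shows "(\<lambda>m. lattice_pt (Suc m) (lattice_floor (Suc m) x)) \<longlonglongrightarrow> x"
proof -
  have "(\<lambda>m. lattice_pt (Suc m) (lattice_floor (Suc m) x) - x) \<longlonglongrightarrow> 0"
  proof (rule Lim_null_comparison)
    show "eventually (\<lambda>m. norm (lattice_pt (Suc m) (lattice_floor (Suc m) x) - x)
        \<le> CARD('d) / real (Suc m)) sequentially"
      using norm_diff_lattice_floor_le[of "Suc _" x] by (simp add: norm_minus_commute)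
    show "(\<lambda>m. CARD('d) / real (Suc m)) \<longlonglongrightarrow> 0"
      using LIMSEQ_Suc[OF lim_const_over_n[of "CARD('d)"]] by simp
  qed
  then show ?thesis by (simp add: LIM_zero_iff)
qed

theorem riemann_sum_tendsto_integral:
  fixes g :: "real^'d \<Rightarrow> real"
  assumes meas: "g \<in> borel_measurable lebesgue" and "bounded (range g)" "bounded {x. g x \<noteq> 0}"
    and cont: "AE x in lebesgue. isCont g x"
  shows "(\<lambda>n. (\<Sum>k\<in>lattice_support n g. g (lattice_pt n k)) / real n ^ CARD('d))
    \<longlonglongrightarrow> integral\<^sup>L lebesgue g"
proof (rule LIMSEQ_imp_Suc)
  obtain B R where B: "\<And>x. \<bar>g x\<bar> \<le> B" and R: "\<And>x. g x \<noteq> 0 \<Longrightarrow> norm x \<le> R"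
    using assms(2,3) unfolding bounded_iff by auto
  define s where "s m x = g (lattice_pt (Suc m) (lattice_floor (Suc m) x))" for m x
  define c where "c = real CARD('d)"
  have support: "finite (lattice_support (Suc m) g)" for m
    using assms(3) by (rule finite_lattice_support) simp
  have near: "norm (x - lattice_pt (Suc m) (lattice_floor (Suc m) x)) \<le> c / real (Suc m)" for m and x :: "real^'d"
    unfolding c_def by (rule norm_diff_lattice_floor_le) simp
  have "(\<lambda>m. integral\<^sup>L lebesgue (s m)) \<longlonglongrightarrow> integral\<^sup>L lebesgue g"
  proof (rule integral_dominated_convergence[OF meas _ _ _ AE_I2])
    show "s m \<in> borel_measurable lebesgue" for m
      unfolding s_def by (rule lattice_step_integral(1)[OF support]) simp
    have "integrable lborel (indicator (cball (0::real^'d) (R + c)) :: _ \<Rightarrow> real)"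
      using emeasure_lborel_cball_finite[of "0::real^'d" "R + c"] by simp
    then show "integrable lebesgue (\<lambda>x. B * indicator (cball (0::real^'d) (R + c)) x)"
      by (simp add: integrable_completion)
    show "norm (s m x) \<le> B * indicator (cball 0 (R + c)) x" for m x
    proof (cases "s m x = 0")
      case False
      then have "norm (lattice_pt (Suc m) (lattice_floor (Suc m) x)) \<le> R"
        using R by (simp add: s_def)
      moreover have "c / real (Suc m) \<le> c" by (simp add: c_def divide_le_eq)
      ultimately have "norm x \<le> R + c"
        using near[of x m] norm_triangle_sub[of x "lattice_pt (Suc m) (lattice_floor (Suc m) x)"]
        by linarith
      then show ?thesis using B by (simp add: s_def)
    qed (use B[of 0] in simp)
    show "AE x in lebesgue. (\<lambda>m. s m x) \<longlonglongrightarrow> g x"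
      using cont unfolding s_def
      by eventually_elim (rule isCont_tendsto_compose[OF _ lattice_pt_floor_tendsto])
  qed
  then show "(\<lambda>m. (\<Sum>k\<in>lattice_support (Suc m) g. g (lattice_pt (Suc m) k)) / real (Suc m) ^ CARD('d))
      \<longlonglongrightarrow> integral\<^sup>L lebesgue g"
    using lattice_step_integral(2)[OF support] by (simp add: s_def[abs_def])
qed

lemma riemann_sum_tendsto_integral_pwC:
  fixes g :: "real^'d \<Rightarrow> real"
  assumes "g \<in> pwC"
  shows "(\<lambda>n. (\<Sum>k\<in>lattice_support n g. g (lattice_pt n k)) / real n ^ CARD('d))
    \<longlonglongrightarrow> integral\<^sup>L lebesgue g"
  using pwC_borel_measurable[OF assms] pwC_bounded_range[OF assms] pwC_bounded_support[OF assms]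
    pwC_AE_isCont[OF assms]
  by (rule riemann_sum_tendsto_integral)

section \<open>Second moments of stationary fields\<close>

lemma sum_abs_reindex_le_infsum:
  fixes r :: "'i \<Rightarrow> real"
  assumes "finite K" "inj_on f K" "(\<lambda>m. \<bar>r m\<bar>) summable_on UNIV"
  shows "(\<Sum>k\<in>K. \<bar>r (f k)\<bar>) \<le> (\<Sum>\<^sub>\<infinity>m. \<bar>r m\<bar>)"
proof -
  have "(\<Sum>k\<in>K. \<bar>r (f k)\<bar>) = (\<Sum>\<^sub>\<infinity>m\<in>f ` K. \<bar>r m\<bar>)"
    using assms(1,2) by (simp add: sum.reindex)
  also have "\<dots> \<le> (\<Sum>\<^sub>\<infinity>m. \<bar>r m\<bar>)"
    using assms(1,3) by (intro infsum_mono_neutral) auto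
  finally show ?thesis .
qed

text \<open>Schur's test for the Toeplitz matrix \<open>(r (k - j))\<^sub>j\<^sub>,\<^sub>k\<close>: each row and each column has
  absolute sum at most \<open>\<Sum>|r|\<close>.\<close>
lemma toeplitz_form_le:
  fixes r :: "'i::ab_group_add \<Rightarrow> real"
  assumes "finite K" "(\<lambda>m. \<bar>r m\<bar>) summable_on UNIV"
  shows "(\<Sum>j\<in>K. \<Sum>k\<in>K. v j * v k * r (k - j)) \<le> (\<Sum>\<^sub>\<infinity>m. \<bar>r m\<bar>) * (\<Sum>k\<in>K. (v k)\<^sup>2)"
proof -
  define C where "C = (\<Sum>\<^sub>\<infinity>m. \<bar>r m\<bar>)"
  have rows: "(\<Sum>k\<in>K. \<bar>r (k - j)\<bar>) \<le> C" for j
    unfolding C_def using assms by (intro sum_abs_reindex_le_infsum) (auto simp: inj_on_def)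
  have columns: "(\<Sum>j\<in>K. \<bar>r (k - j)\<bar>) \<le> C" for k
    unfolding C_def using assms by (intro sum_abs_reindex_le_infsum) (auto simp: inj_on_def)
  have pointwise: "v j * v k * r (k - j) \<le> (v j)\<^sup>2 / 2 * \<bar>r (k - j)\<bar> + (v k)\<^sup>2 / 2 * \<bar>r (k - j)\<bar>" for j k
  proof -
    have "v j * v k \<le> (v j)\<^sup>2 / 2 + (v k)\<^sup>2 / 2" and "- (v j * v k) \<le> (v j)\<^sup>2 / 2 + (v k)\<^sup>2 / 2"
      using sum_squares_bound[of "v j" "v k"] sum_squares_bound[of "v j" "- v k"] by simp_all
    then have "\<bar>v j * v k\<bar> \<le> (v j)\<^sup>2 / 2 + (v k)\<^sup>2 / 2" by linarith
    then have "\<bar>v j * v k\<bar> * \<bar>r (k - j)\<bar> \<le> ((v j)\<^sup>2 / 2 + (v k)\<^sup>2 / 2) * \<bar>r (k - j)\<bar>"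
      by (rule mult_right_mono) simp
    moreover have "v j * v k * r (k - j) \<le> \<bar>v j * v k\<bar> * \<bar>r (k - j)\<bar>"
      using abs_ge_self[of "v j * v k * r (k - j)"] by (simp add: abs_mult)
    ultimately show ?thesis by (simp add: distrib_right)
  qed
  have "(\<Sum>j\<in>K. \<Sum>k\<in>K. v j * v k * r (k - j))
      \<le> (\<Sum>j\<in>K. \<Sum>k\<in>K. (v j)\<^sup>2 / 2 * \<bar>r (k - j)\<bar> + (v k)\<^sup>2 / 2 * \<bar>r (k - j)\<bar>)"
    by (intro sum_mono pointwise)
  also have "\<dots> = (\<Sum>j\<in>K. \<Sum>k\<in>K. (v j)\<^sup>2 / 2 * \<bar>r (k - j)\<bar>)
      + (\<Sum>k\<in>K. \<Sum>j\<in>K. (v k)\<^sup>2 / 2 * \<bar>r (k - j)\<bar>)"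
    unfolding sum.distrib using sum.swap[of "\<lambda>j k. (v k)\<^sup>2 / 2 * \<bar>r (k - j)\<bar>" K K] by simp
  also have "\<dots> = (\<Sum>j\<in>K. (v j)\<^sup>2 / 2 * (\<Sum>k\<in>K. \<bar>r (k - j)\<bar>))
      + (\<Sum>k\<in>K. (v k)\<^sup>2 / 2 * (\<Sum>j\<in>K. \<bar>r (k - j)\<bar>))"
    by (simp add: sum_distrib_left)
  also have "\<dots> \<le> (\<Sum>j\<in>K. (v j)\<^sup>2 / 2 * C) + (\<Sum>k\<in>K. (v k)\<^sup>2 / 2 * C)"
    using rows columns by (intro add_mono sum_mono mult_left_mono) auto
  also have "\<dots> = C * (\<Sum>k\<in>K. (v k)\<^sup>2)"
    by (simp add: sum_distrib_left sum_distrib_right field_simps)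
  finally show ?thesis unfolding C_def .
qed

locale centered_stationary_field = prob_space M for M :: "'a measure" +
  fixes \<zeta> :: "'i::ab_group_add \<Rightarrow> 'a \<Rightarrow> real"
  assumes measurable_field [measurable]: "\<And>k. \<zeta> k \<in> borel_measurable M"
    and stationary: "stationary_field M \<zeta>"
    and square_integrable: "integrable M (\<lambda>\<omega>. (\<zeta> 0 \<omega>)\<^sup>2)"
    and mean_zero: "expectation (\<zeta> 0) = 0"
begin

lemma shift_invariant:
  fixes F :: "('i \<Rightarrow> real) \<Rightarrow> real"
  assumes "finite K" "F \<in> borel_measurable (PiM K (\<lambda>_. borel))"
  shows "integrable M (\<lambda>\<omega>. F (\<lambda>k\<in>K. \<zeta> (k + h) \<omega>)) \<longleftrightarrow> integrable M (\<lambda>\<omega>. F (\<lambda>k\<in>K. \<zeta> k \<omega>))"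
    and "(\<integral>\<omega>. F (\<lambda>k\<in>K. \<zeta> (k + h) \<omega>) \<partial>M) = (\<integral>\<omega>. F (\<lambda>k\<in>K. \<zeta> k \<omega>) \<partial>M)"
proof -
  have shifted: "(\<lambda>\<omega>. \<lambda>k\<in>K. \<zeta> (k + h) \<omega>) \<in> measurable M (PiM K (\<lambda>_. borel))"
    and unshifted: "(\<lambda>\<omega>. \<lambda>k\<in>K. \<zeta> k \<omega>) \<in> measurable M (PiM K (\<lambda>_. borel))"
    by (intro measurable_restrict measurable_field)+
  have "distr M (PiM K (\<lambda>_. borel)) (\<lambda>\<omega>. \<lambda>k\<in>K. \<zeta> (k + h) \<omega>)
      = distr M (PiM K (\<lambda>_. borel)) (\<lambda>\<omega>. \<lambda>k\<in>K. \<zeta> k \<omega>)"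
    using stationary assms(1) unfolding stationary_field_def by blast
  then show "integrable M (\<lambda>\<omega>. F (\<lambda>k\<in>K. \<zeta> (k + h) \<omega>)) \<longleftrightarrow> integrable M (\<lambda>\<omega>. F (\<lambda>k\<in>K. \<zeta> k \<omega>))"
    and "(\<integral>\<omega>. F (\<lambda>k\<in>K. \<zeta> (k + h) \<omega>) \<partial>M) = (\<integral>\<omega>. F (\<lambda>k\<in>K. \<zeta> k \<omega>) \<partial>M)"
    using integrable_distr_eq[OF shifted assms(2)] integrable_distr_eq[OF unshifted assms(2)]
      integral_distr[OF shifted assms(2)] integral_distr[OF unshifted assms(2)] by simp_all
qed

lemma integrable_square_field: "integrable M (\<lambda>\<omega>. (\<zeta> k \<omega>)\<^sup>2)"
proof -
  have [measurable]: "(\<lambda>y::'i \<Rightarrow> real. y 0) \<in> measurable (PiM {0} (\<lambda>_. borel)) borel"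
    by (rule measurable_component_singleton) simp
  have "(\<lambda>y::'i \<Rightarrow> real. (y 0)\<^sup>2) \<in> borel_measurable (PiM {0} (\<lambda>_. borel))" by measurable
  from shift_invariant(1)[OF _ this, of k] square_integrable show ?thesis by simp
qed

lemma integrable_field: "integrable M (\<zeta> k)"
  using measurable_field integrable_square_field by (rule square_integrable_imp_integrable)

lemma integrable_mult_field: "integrable M (\<lambda>\<omega>. \<zeta> j \<omega> * \<zeta> k \<omega>)"
proof (rule Bochner_Integration.integrable_bound)
  show "integrable M (\<lambda>\<omega>. (\<zeta> j \<omega>)\<^sup>2 + (\<zeta> k \<omega>)\<^sup>2)"
    using integrable_square_field by auto
  show "AE \<omega> in M. norm (\<zeta> j \<omega> * \<zeta> k \<omega>) \<le> norm ((\<zeta> j \<omega>)\<^sup>2 + (\<zeta> k \<omega>)\<^sup>2)"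
  proof (rule AE_I2)
    fix \<omega>
    show "norm (\<zeta> j \<omega> * \<zeta> k \<omega>) \<le> norm ((\<zeta> j \<omega>)\<^sup>2 + (\<zeta> k \<omega>)\<^sup>2)"
    proof -
      have "2 * (\<bar>\<zeta> j \<omega>\<bar> * \<bar>\<zeta> k \<omega>\<bar>) \<le> (\<zeta> j \<omega>)\<^sup>2 + (\<zeta> k \<omega>)\<^sup>2"
        using sum_squares_bound[of "\<bar>\<zeta> j \<omega>\<bar>" "\<bar>\<zeta> k \<omega>\<bar>"] by simp
      moreover have "0 \<le> \<bar>\<zeta> j \<omega>\<bar> * \<bar>\<zeta> k \<omega>\<bar>" by simp
      ultimately have "\<bar>\<zeta> j \<omega>\<bar> * \<bar>\<zeta> k \<omega>\<bar> \<le> (\<zeta> j \<omega>)\<^sup>2 + (\<zeta> k \<omega>)\<^sup>2" by linarith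
      then show ?thesis by (simp add: abs_mult)
    qed
  qed
qed measurable

lemma integral_mult_field_eq_covariance:
  "(\<integral>\<omega>. \<zeta> j \<omega> * \<zeta> k \<omega> \<partial>M) = covariance M (\<zeta> 0) (\<zeta> (k - j))"
proof -
  define K where "K = {0, k - j}"
  have [measurable]: "(\<lambda>y::'i \<Rightarrow> real. y 0) \<in> measurable (PiM K (\<lambda>_. borel)) borel"
    "(\<lambda>y::'i \<Rightarrow> real. y (k - j)) \<in> measurable (PiM K (\<lambda>_. borel)) borel"
    by (auto intro: measurable_component_singleton simp: K_def)
  have "(\<lambda>y::'i \<Rightarrow> real. y 0 * y (k - j)) \<in> borel_measurable (PiM K (\<lambda>_. borel))" by measurable
  from shift_invariant(2)[OF _ this, of j]
  have "(\<integral>\<omega>. \<zeta> j \<omega> * \<zeta> k \<omega> \<partial>M) = (\<integral>\<omega>. \<zeta> 0 \<omega> * \<zeta> (k - j) \<omega> \<partial>M)"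
    by (simp add: K_def)
  also have "\<dots> = covariance M (\<zeta> 0) (\<zeta> (k - j))"
    using mean_zero integrable_mult_field integrable_field
    by (simp add: covariance_def algebra_simps)
  finally show ?thesis .
qed

lemma second_moment_sum_le:
  assumes "finite K" "(\<lambda>m. \<bar>covariance M (\<zeta> 0) (\<zeta> m)\<bar>) summable_on UNIV"
  shows "integrable M (\<lambda>\<omega>. (\<Sum>k\<in>K. v k * \<zeta> k \<omega>)\<^sup>2)"
    and "(\<integral>\<omega>. (\<Sum>k\<in>K. v k * \<zeta> k \<omega>)\<^sup>2 \<partial>M)
      \<le> (\<Sum>\<^sub>\<infinity>m. \<bar>covariance M (\<zeta> 0) (\<zeta> m)\<bar>) * (\<Sum>k\<in>K. (v k)\<^sup>2)"
proof -
  have square: "(\<Sum>k\<in>K. v k * \<zeta> k \<omega>)\<^sup>2 = (\<Sum>j\<in>K. \<Sum>k\<in>K. v j * v k * (\<zeta> j \<omega> * \<zeta> k \<omega>))" for \<omega>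
    by (simp add: power2_eq_square sum_product algebra_simps)
  show "integrable M (\<lambda>\<omega>. (\<Sum>k\<in>K. v k * \<zeta> k \<omega>)\<^sup>2)"
    unfolding square
    by (intro Bochner_Integration.integrable_sum integrable_mult_right integrable_mult_field)
  have "(\<integral>\<omega>. (\<Sum>k\<in>K. v k * \<zeta> k \<omega>)\<^sup>2 \<partial>M)
      = (\<Sum>j\<in>K. \<Sum>k\<in>K. v j * v k * covariance M (\<zeta> 0) (\<zeta> (k - j)))"
    unfolding square using integrable_mult_field
    by (simp add: Bochner_Integration.integral_sum Bochner_Integration.integrable_sum
        integral_mult_field_eq_covariance)
  also have "\<dots> \<le> (\<Sum>\<^sub>\<infinity>m. \<bar>covariance M (\<zeta> 0) (\<zeta> m)\<bar>) * (\<Sum>k\<in>K. (v k)\<^sup>2)"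
    using assms by (rule toeplitz_form_le)
  finally show "(\<integral>\<omega>. (\<Sum>k\<in>K. v k * \<zeta> k \<omega>)\<^sup>2 \<partial>M)
      \<le> (\<Sum>\<^sub>\<infinity>m. \<bar>covariance M (\<zeta> 0) (\<zeta> m)\<bar>) * (\<Sum>k\<in>K. (v k)\<^sup>2)" .
qed

end

section \<open>The scaled lattice sums \<open>S\<^sub>n\<close>\<close>

lemma S_eq_sum_superset:
  fixes \<zeta> :: "int^'d \<Rightarrow> 'a \<Rightarrow> real"
  assumes "finite K" "lattice_support n \<phi> \<subseteq> K"
  shows "S \<zeta> n \<phi> \<omega> = real n powr (- real CARD('d) / 2) * (\<Sum>k\<in>K. \<zeta> k \<omega> * \<phi> (lattice_pt n k))"
proof -
  have "(\<Sum>k | \<phi> (lattice_pt n k) \<noteq> 0. \<zeta> k \<omega> * \<phi> (lattice_pt n k)) = (\<Sum>k\<in>K. \<zeta> k \<omega> * \<phi> (lattice_pt n k))"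
    using assms by (intro sum.mono_neutral_left) (auto simp: lattice_support_def)
  then show ?thesis by (simp add: S_def)
qed

lemma borel_measurable_S: "(\<And>k. \<zeta> k \<in> borel_measurable M) \<Longrightarrow> S \<zeta> n \<phi> \<in> borel_measurable M"
  unfolding S_def[abs_def]
  by (intro borel_measurable_times borel_measurable_const borel_measurable_sum) auto

lemma S_sum:
  fixes \<zeta> :: "int^'d \<Rightarrow> 'a \<Rightarrow> real" and \<phi> :: "'i \<Rightarrow> real^'d \<Rightarrow> real"
  assumes "finite I" "\<And>i. i \<in> I \<Longrightarrow> bounded {x. \<phi> i x \<noteq> 0}"
  shows "S \<zeta> n (\<lambda>x. \<Sum>i\<in>I. c i * \<phi> i x) \<omega> = (\<Sum>i\<in>I. c i * S \<zeta> n (\<phi> i) \<omega>)"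
proof (cases "n = 0")
  case False
  define K where "K = (\<Union>i\<in>I. lattice_support n (\<phi> i))"
  define a where "a = real n powr (- real CARD('d) / 2)"
  have "finite K"
    unfolding K_def using assms False by (auto intro: finite_lattice_support)
  have "lattice_support n (\<lambda>x. \<Sum>i\<in>I. c i * \<phi> i x) \<subseteq> K"
  proof
    fix k assume "k \<in> lattice_support n (\<lambda>x. \<Sum>i\<in>I. c i * \<phi> i x)"
    then have "(\<Sum>i\<in>I. c i * \<phi> i (lattice_pt n k)) \<noteq> 0" by (simp add: lattice_support_def)
    then obtain i where "i \<in> I" "c i * \<phi> i (lattice_pt n k) \<noteq> 0"
      by (rule sum.not_neutral_contains_not_neutral)
    then show "k \<in> K" by (auto simp: K_def lattice_support_def)
  qed
  with \<open>finite K\<close> have "S \<zeta> n (\<lambda>x. \<Sum>i\<in>I. c i * \<phi> i x) \<omega>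
      = a * (\<Sum>k\<in>K. \<zeta> k \<omega> * (\<Sum>i\<in>I. c i * \<phi> i (lattice_pt n k)))"
    unfolding a_def by (rule S_eq_sum_superset)
  also have "\<dots> = a * (\<Sum>k\<in>K. \<Sum>i\<in>I. c i * (\<zeta> k \<omega> * \<phi> i (lattice_pt n k)))"
    by (simp add: sum_distrib_left mult.left_commute)
  also have "\<dots> = a * (\<Sum>i\<in>I. \<Sum>k\<in>K. c i * (\<zeta> k \<omega> * \<phi> i (lattice_pt n k)))"
    by (subst sum.swap) (rule refl)
  also have "\<dots> = (\<Sum>i\<in>I. c i * (a * (\<Sum>k\<in>K. \<zeta> k \<omega> * \<phi> i (lattice_pt n k))))"
    by (simp add: sum_distrib_left mult.left_commute)
  also have "\<dots> = (\<Sum>i\<in>I. c i * S \<zeta> n (\<phi> i) \<omega>)"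
    using \<open>finite K\<close> unfolding a_def
    by (intro sum.cong refl arg_cong[where f="(*) (c _)"] S_eq_sum_superset[symmetric])
      (auto simp: K_def)
  finally show ?thesis .
qed (simp add: S_def)

lemma S_diff:
  fixes \<zeta> :: "int^'d \<Rightarrow> 'a \<Rightarrow> real"
  assumes "bounded {x. \<phi> x \<noteq> 0}" "bounded {x. \<psi> x \<noteq> 0}"
  shows "S \<zeta> n (\<lambda>x. \<phi> x - \<psi> x) \<omega> = S \<zeta> n \<phi> \<omega> - S \<zeta> n \<psi> \<omega>"
proof -
  have "S \<zeta> n (\<lambda>x. \<Sum>b\<in>UNIV. (if b then 1 else -1) * (if b then \<phi> else \<psi>) x) \<omega>
      = (\<Sum>b\<in>UNIV. (if b then 1 else -1) * S \<zeta> n (if b then \<phi> else \<psi>) \<omega>)"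
    using assms by (intro S_sum) auto
  then show ?thesis by (simp add: UNIV_bool)
qed

lemma second_moment_S_le:
  fixes \<zeta> :: "int^'d \<Rightarrow> 'a \<Rightarrow> real"
  assumes "centered_stationary_field M \<zeta>"
    and "(\<lambda>m. \<bar>covariance M (\<zeta> 0) (\<zeta> m)\<bar>) summable_on UNIV"
    and "bounded {x. h x \<noteq> 0}" "n > 0"
  shows "integrable M (\<lambda>\<omega>. (S \<zeta> n h \<omega>)\<^sup>2)"
    and "(\<integral>\<omega>. (S \<zeta> n h \<omega>)\<^sup>2 \<partial>M) \<le> (\<Sum>\<^sub>\<infinity>m. \<bar>covariance M (\<zeta> 0) (\<zeta> m)\<bar>)
      * ((\<Sum>k\<in>lattice_support n h. (h (lattice_pt n k))\<^sup>2) / real n ^ CARD('d))"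
proof -
  interpret centered_stationary_field M \<zeta> by fact
  define C where "C = (\<Sum>\<^sub>\<infinity>m. \<bar>covariance M (\<zeta> 0) (\<zeta> m)\<bar>)"
  define K where "K = lattice_support n h"
  define a where "a = real n powr (- real CARD('d) / 2)"
  define Y where "Y \<omega> = (\<Sum>k\<in>K. h (lattice_pt n k) * \<zeta> k \<omega>)" for \<omega>
  have "finite K" unfolding K_def using assms(3,4) by (rule finite_lattice_support)
  have S_eq: "(\<lambda>\<omega>. (S \<zeta> n h \<omega>)\<^sup>2) = (\<lambda>\<omega>. a\<^sup>2 * (Y \<omega>)\<^sup>2)"
  proof
    fix \<omega>
    have "S \<zeta> n h \<omega> = a * Y \<omega>"
      unfolding a_def Y_def using \<open>finite K\<close>
      by (subst S_eq_sum_superset[where K=K]) (auto simp: K_def mult.commute)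
    then show "(S \<zeta> n h \<omega>)\<^sup>2 = a\<^sup>2 * (Y \<omega>)\<^sup>2" by (simp add: power_mult_distrib)
  qed
  have a_square: "a\<^sup>2 = 1 / real n ^ CARD('d)"
  proof -
    have "a\<^sup>2 = real n powr (- real CARD('d))"
      unfolding a_def power2_eq_square by (simp add: powr_add[symmetric])
    also have "\<dots> = 1 / real n ^ CARD('d)"
      using assms(4) by (simp add: powr_minus powr_realpow divide_inverse)
    finally show ?thesis .
  qed
  have Y: "integrable M (\<lambda>\<omega>. (Y \<omega>)\<^sup>2)" "(\<integral>\<omega>. (Y \<omega>)\<^sup>2 \<partial>M) \<le> C * (\<Sum>k\<in>K. (h (lattice_pt n k))\<^sup>2)"
    unfolding Y_def C_def
    using second_moment_sum_le[OF \<open>finite K\<close> assms(2), of "\<lambda>k. h (lattice_pt n k)"] by simp_all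
  then show "integrable M (\<lambda>\<omega>. (S \<zeta> n h \<omega>)\<^sup>2)" unfolding S_eq by simp
  have "(\<integral>\<omega>. (S \<zeta> n h \<omega>)\<^sup>2 \<partial>M) = a\<^sup>2 * (\<integral>\<omega>. (Y \<omega>)\<^sup>2 \<partial>M)" unfolding S_eq by simp
  also have "\<dots> \<le> a\<^sup>2 * (C * (\<Sum>k\<in>K. (h (lattice_pt n k))\<^sup>2))"
    using Y(2) by (rule mult_left_mono) simp
  finally show "(\<integral>\<omega>. (S \<zeta> n h \<omega>)\<^sup>2 \<partial>M) \<le> (\<Sum>\<^sub>\<infinity>m. \<bar>covariance M (\<zeta> 0) (\<zeta> m)\<bar>)
      * ((\<Sum>k\<in>lattice_support n h. (h (lattice_pt n k))\<^sup>2) / real n ^ CARD('d))"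
    unfolding a_square C_def K_def by simp
qed

lemma eventually_second_moment_S_less:
  fixes \<zeta> :: "int^'d \<Rightarrow> 'a \<Rightarrow> real"
  assumes "centered_stationary_field M \<zeta>"
    and "(\<lambda>m. \<bar>covariance M (\<zeta> 0) (\<zeta> m)\<bar>) summable_on UNIV"
    and "h \<in> pwC" "(\<Sum>\<^sub>\<infinity>m. \<bar>covariance M (\<zeta> 0) (\<zeta> m)\<bar>) * (\<integral>x. (h x)\<^sup>2 \<partial>lebesgue) < r"
  shows "eventually (\<lambda>n. (\<integral>\<omega>. (S \<zeta> n h \<omega>)\<^sup>2 \<partial>M) < r) sequentially"
proof -
  define C where "C = (\<Sum>\<^sub>\<infinity>m. \<bar>covariance M (\<zeta> 0) (\<zeta> m)\<bar>)"
  define R where "R n = (\<Sum>k\<in>lattice_support n h. (h (lattice_pt n k))\<^sup>2) / real n ^ CARD('d)" for n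
  have "(\<lambda>x. (h x)\<^sup>2) \<in> pwC" using pwC_mult[OF assms(3,3)] by (simp add: power2_eq_square)
  moreover have "lattice_support n (\<lambda>x. (h x)\<^sup>2) = lattice_support n h" for n
    by (simp add: lattice_support_def)
  ultimately have "R \<longlonglongrightarrow> (\<integral>x. (h x)\<^sup>2 \<partial>lebesgue)"
    unfolding R_def using riemann_sum_tendsto_integral_pwC[of "\<lambda>x. (h x)\<^sup>2"] by simp
  then have "(\<lambda>n. C * R n) \<longlonglongrightarrow> C * (\<integral>x. (h x)\<^sup>2 \<partial>lebesgue)"
    by (intro tendsto_intros)
  then have "eventually (\<lambda>n. C * R n < r) sequentially"
    using assms(4) unfolding C_def by (rule order_tendstoD(2))
  with eventually_gt_at_top[of 0] show ?thesis
  proof eventually_elim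
    case (elim n)
    with second_moment_S_le(2)[OF assms(1,2) pwC_bounded_support[OF assms(3)] \<open>n > 0\<close>]
    show ?case unfolding C_def R_def by linarith
  qed
qed

lemma integrable_S: "(\<And>k. integrable M (\<zeta> k)) \<Longrightarrow> integrable M (S \<zeta> n \<phi>)"
  unfolding S_def[abs_def]
  by (intro integrable_mult_right Bochner_Integration.integrable_sum integrable_mult_left)

lemma eventually_integral_abs_S_le:
  fixes \<zeta> :: "int^'d \<Rightarrow> 'a \<Rightarrow> real"
  assumes "centered_stationary_field M \<zeta>"
    and "(\<lambda>m. \<bar>covariance M (\<zeta> 0) (\<zeta> m)\<bar>) summable_on UNIV"
    and "h \<in> pwC" "(\<Sum>\<^sub>\<infinity>m. \<bar>covariance M (\<zeta> 0) (\<zeta> m)\<bar>) * (\<integral>x. (h x)\<^sup>2 \<partial>lebesgue) < \<delta>\<^sup>2" "\<delta> > 0"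
  shows "eventually (\<lambda>n. (\<integral>\<omega>. \<bar>S \<zeta> n h \<omega>\<bar> \<partial>M) \<le> \<delta>) sequentially"
proof -
  interpret centered_stationary_field M \<zeta> by fact
  from eventually_second_moment_S_less[OF assms(1-4)] eventually_gt_at_top[of 0]
  show ?thesis
  proof eventually_elim
    case (elim n)
    show ?case
      using second_moment_S_le(1)[OF assms(1,2) pwC_bounded_support[OF assms(3)] elim(2)]
        less_imp_le[OF elim(1)] assms(5)
      by (intro integral_abs_le_of_second_moment(2)[OF prob_space_axioms]
          borel_measurable_S measurable_field)
  qed
qed

section \<open>Finite linear combinations of white noise\<close>

lemma centered_gaussian_second_moment:
  assumes "v \<ge> 0"
  shows "integrable (centered_gaussian v) (\<lambda>z. z\<^sup>2)" "(\<integral>z. z\<^sup>2 \<partial>centered_gaussian v) = v"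
proof (atomize (full), cases "v = 0")
  case True
  have "integrable (return borel (0::real)) (\<lambda>z. z\<^sup>2)"
    by (intro finite_measure.integrable_const_bound[where B=0] prob_space.finite_measure
        prob_space_return) (auto simp: AE_return)
  with True show "integrable (centered_gaussian v) (\<lambda>z. z\<^sup>2) \<and> (\<integral>z. z\<^sup>2 \<partial>centered_gaussian v) = v"
    by (simp add: centered_gaussian_def integral_return)
next
  case False
  define s where "s = sqrt v"
  have "s > 0" using False assms by (simp add: s_def)
  have "centered_gaussian v = density lborel (normal_density 0 s)"
    using False by (simp add: centered_gaussian_def s_def)
  moreover have "integrable lborel (\<lambda>x. normal_density 0 s x * x\<^sup>2)"
    using integrable_normal_moment[OF \<open>s > 0\<close>, of 0 2] by simp
  moreover have "(\<integral>x. normal_density 0 s x * x\<^sup>2 \<partial>lborel) = v"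
    using integral_normal_moment_even[OF \<open>s > 0\<close>, of 0 1] assms by (simp add: s_def power2_eq_square)
  ultimately show "integrable (centered_gaussian v) (\<lambda>z. z\<^sup>2) \<and> (\<integral>z. z\<^sup>2 \<partial>centered_gaussian v) = v"
    by (simp add: integrable_density integral_density)
qed

lemma sum_regroup_image:
  fixes c :: "'i \<Rightarrow> 'b::semiring_0"
  assumes "finite I"
  shows "(\<Sum>i\<in>I. c i * G (\<phi> i)) = (\<Sum>g\<in>\<phi> ` I. (\<Sum>i\<in>{i\<in>I. \<phi> i = g}. c i) * G g)"
proof -
  have "(\<Sum>i\<in>I. c i * G (\<phi> i)) = (\<Sum>g\<in>\<phi> ` I. \<Sum>i\<in>{i\<in>I. \<phi> i = g}. c i * G (\<phi> i))"
    using assms by (rule sum.image_gen)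
  also have "\<dots> = (\<Sum>g\<in>\<phi> ` I. (\<Sum>i\<in>{i\<in>I. \<phi> i = g}. c i) * G g)"
  proof (rule sum.cong[OF refl])
    fix g
    have "(\<Sum>i\<in>{i\<in>I. \<phi> i = g}. c i * G (\<phi> i)) = (\<Sum>i\<in>{i\<in>I. \<phi> i = g}. c i * G g)"
      by (rule sum.cong) auto
    then show "(\<Sum>i\<in>{i\<in>I. \<phi> i = g}. c i * G (\<phi> i)) = (\<Sum>i\<in>{i\<in>I. \<phi> i = g}. c i) * G g"
      by (simp add: sum_distrib_right)
  qed
  finally show ?thesis .
qed

text \<open>The definition of \<open>isonormal\<close> only speaks about sets of functions; here the
  family \<open>\<phi>\<close> may repeat functions.\<close>
lemma isonormal_sum_distr:
  fixes W :: "('a::euclidean_space \<Rightarrow> real) \<Rightarrow> 'w \<Rightarrow> real" and \<phi> :: "'i \<Rightarrow> 'a \<Rightarrow> real"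
  assumes iso: "isonormal N W" and "finite I" "\<And>i. i \<in> I \<Longrightarrow> \<phi> i \<in> L2"
  shows "distr N borel (\<lambda>\<omega>. \<Sum>i\<in>I. c i * W (\<phi> i) \<omega>)
    = centered_gaussian (\<Sum>i\<in>I. \<Sum>j\<in>I. c i * c j * L2_inner (\<phi> i) (\<phi> j))"
proof -
  define C where "C g = (\<Sum>i\<in>{i\<in>I. \<phi> i = g}. c i)" for g
  define H where "H g = (\<Sum>g'\<in>\<phi> ` I. C g' * L2_inner g g')" for g
  have regroup: "(\<Sum>i\<in>I. c i * G (\<phi> i)) = (\<Sum>g\<in>\<phi> ` I. C g * G g)" for G
    unfolding C_def using \<open>finite I\<close> by (rule sum_regroup_image)
  have "(\<lambda>\<omega>. \<Sum>i\<in>I. c i * W (\<phi> i) \<omega>) = (\<lambda>\<omega>. \<Sum>g\<in>\<phi> ` I. C g * W g \<omega>)"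
  proof
    show "(\<Sum>i\<in>I. c i * W (\<phi> i) \<omega>) = (\<Sum>g\<in>\<phi> ` I. C g * W g \<omega>)" for \<omega>
      using regroup[of "\<lambda>g. W g \<omega>"] .
  qed
  moreover have "(\<Sum>i\<in>I. \<Sum>j\<in>I. c i * c j * L2_inner (\<phi> i) (\<phi> j))
      = (\<Sum>g\<in>\<phi> ` I. \<Sum>g'\<in>\<phi> ` I. C g * C g' * L2_inner g g')"
  proof -
    have inner: "(\<Sum>j\<in>I. c j * L2_inner g (\<phi> j)) = H g" for g
      unfolding H_def by (rule regroup)
    have "(\<Sum>i\<in>I. \<Sum>j\<in>I. c i * c j * L2_inner (\<phi> i) (\<phi> j))
        = (\<Sum>i\<in>I. c i * (\<Sum>j\<in>I. c j * L2_inner (\<phi> i) (\<phi> j)))"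
      by (simp add: sum_distrib_left mult.assoc)
    also have "\<dots> = (\<Sum>g\<in>\<phi> ` I. C g * H g)"
      unfolding inner by (rule regroup)
    also have "\<dots> = (\<Sum>g\<in>\<phi> ` I. \<Sum>g'\<in>\<phi> ` I. C g * C g' * L2_inner g g')"
      by (simp add: H_def sum_distrib_left mult.assoc)
    finally show ?thesis .
  qed
  moreover have "distr N borel (\<lambda>\<omega>. \<Sum>g\<in>\<phi> ` I. C g * W g \<omega>)
      = centered_gaussian (\<Sum>g\<in>\<phi> ` I. \<Sum>g'\<in>\<phi> ` I. C g * C g' * L2_inner g g')"
    using iso \<open>finite I\<close> assms(3) unfolding isonormal_def by blast
  ultimately show ?thesis by simp
qed

lemma sum_L2_inner_eq_integral_square:
  fixes \<phi> :: "'i \<Rightarrow> 'a::euclidean_space \<Rightarrow> real"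
  assumes "finite I" "\<And>i. i \<in> I \<Longrightarrow> \<phi> i \<in> pwC"
  shows "(\<Sum>i\<in>I. \<Sum>j\<in>I. c i * c j * L2_inner (\<phi> i) (\<phi> j)) = (\<integral>x. (\<Sum>i\<in>I. c i * \<phi> i x)\<^sup>2 \<partial>lebesgue)"
proof -
  have "integrable lebesgue (\<lambda>x. \<phi> i x * \<phi> j x)" if "i \<in> I" "j \<in> I" for i j
    using that assms(2) by (intro pwC_integrable pwC_mult)
  then have "(\<integral>x. (\<Sum>i\<in>I. \<Sum>j\<in>I. c i * c j * (\<phi> i x * \<phi> j x)) \<partial>lebesgue)
      = (\<Sum>i\<in>I. \<Sum>j\<in>I. c i * c j * L2_inner (\<phi> i) (\<phi> j))"
    by (simp add: Bochner_Integration.integral_sum Bochner_Integration.integrable_sum L2_inner_def)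
  moreover have "(\<Sum>i\<in>I. c i * \<phi> i x)\<^sup>2 = (\<Sum>i\<in>I. \<Sum>j\<in>I. c i * c j * (\<phi> i x * \<phi> j x))" for x
    by (simp add: power2_eq_square sum_product algebra_simps)
  ultimately show ?thesis by simp
qed

lemma isonormal_sum_second_moment:
  fixes W :: "('a::euclidean_space \<Rightarrow> real) \<Rightarrow> 'w \<Rightarrow> real" and \<phi> :: "'i \<Rightarrow> 'a \<Rightarrow> real"
  assumes iso: "isonormal N W" and "finite I" "\<And>i. i \<in> I \<Longrightarrow> \<phi> i \<in> pwC"
  shows "integrable N (\<lambda>\<omega>. (\<Sum>i\<in>I. c i * W (\<phi> i) \<omega>)\<^sup>2)"
    and "(\<integral>\<omega>. (\<Sum>i\<in>I. c i * W (\<phi> i) \<omega>)\<^sup>2 \<partial>N) = (\<integral>x. (\<Sum>i\<in>I. c i * \<phi> i x)\<^sup>2 \<partial>lebesgue)"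
proof -
  define v where "v = (\<integral>x. (\<Sum>i\<in>I. c i * \<phi> i x)\<^sup>2 \<partial>lebesgue)"
  have "v \<ge> 0" unfolding v_def by (intro integral_nonneg_AE) auto
  have "W (\<phi> i) \<in> borel_measurable N" if "i \<in> I" for i
    using iso assms(3)[OF that] pwC_L2 unfolding isonormal_def by blast
  then have meas: "(\<lambda>\<omega>. \<Sum>i\<in>I. c i * W (\<phi> i) \<omega>) \<in> borel_measurable N" by measurable
  have "v = (\<Sum>i\<in>I. \<Sum>j\<in>I. c i * c j * L2_inner (\<phi> i) (\<phi> j))"
    unfolding v_def by (rule sum_L2_inner_eq_integral_square[OF assms(2,3), symmetric])
  then have "distr N borel (\<lambda>\<omega>. \<Sum>i\<in>I. c i * W (\<phi> i) \<omega>) = centered_gaussian v"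
    using isonormal_sum_distr[OF iso assms(2) pwC_L2[OF assms(3)]] by simp
  then show "integrable N (\<lambda>\<omega>. (\<Sum>i\<in>I. c i * W (\<phi> i) \<omega>)\<^sup>2)"
    and "(\<integral>\<omega>. (\<Sum>i\<in>I. c i * W (\<phi> i) \<omega>)\<^sup>2 \<partial>N) = (\<integral>x. (\<Sum>i\<in>I. c i * \<phi> i x)\<^sup>2 \<partial>lebesgue)"
    using centered_gaussian_second_moment[OF \<open>v \<ge> 0\<close>]
      integrable_distr_eq[OF meas, of "\<lambda>z. z\<^sup>2"] integral_distr[OF meas, of "\<lambda>z. z\<^sup>2"]
    unfolding v_def by simp_all
qed

lemma isonormal_sum_diff_L1_le:
  fixes W :: "('a::euclidean_space \<Rightarrow> real) \<Rightarrow> 'w \<Rightarrow> real" and \<phi> :: "'i \<Rightarrow> 'a \<Rightarrow> real"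
  assumes iso: "isonormal N W" and "finite I" "\<And>i. i \<in> I \<Longrightarrow> \<phi> i \<in> pwC" "\<psi> \<in> pwC"
    and "\<sigma>\<^sup>2 * (\<integral>x. ((\<Sum>i\<in>I. c i * \<phi> i x) - \<psi> x)\<^sup>2 \<partial>lebesgue) \<le> \<delta>\<^sup>2" "\<delta> > 0"
  shows "integrable N (\<lambda>\<omega>. \<sigma> * (\<Sum>i\<in>I. c i * W (\<phi> i) \<omega>) - \<sigma> * W \<psi> \<omega>)"
    and "(\<integral>\<omega>. \<bar>\<sigma> * (\<Sum>i\<in>I. c i * W (\<phi> i) \<omega>) - \<sigma> * W \<psi> \<omega>\<bar> \<partial>N) \<le> \<delta>"
proof -
  text \<open>The difference is itself a combination of white noise, indexed by \<open>I\<close> and one extra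
    index \<^const>\<open>None\<close> for \<open>\<psi>\<close>.\<close>
  define J where "J = insert None (Some ` I)"
  define \<phi>' where "\<phi>' = case_option \<psi> \<phi>"
  define c' where "c' = case_option (- \<sigma>) (\<lambda>i. \<sigma> * c i)"
  have J_sum: "(\<Sum>j\<in>J. c' j * f (\<phi>' j)) = \<sigma> * (\<Sum>i\<in>I. c i * f (\<phi> i)) - \<sigma> * f \<psi>" for f
    using \<open>finite I\<close> by (simp add: J_def \<phi>'_def c'_def sum.reindex sum_distrib_left mult.assoc)
  have "finite J" and J_pwC: "\<And>j. j \<in> J \<Longrightarrow> \<phi>' j \<in> pwC"
    using assms(2-4) by (auto simp: J_def \<phi>'_def)
  note moments = isonormal_sum_second_moment[where I=J and \<phi>=\<phi>' and c=c', OF iso \<open>finite J\<close> J_pwC]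
  have "prob_space N" using iso by (simp add: isonormal_def)
  moreover have "W (\<phi>' j) \<in> borel_measurable N" if "j \<in> J" for j
    using iso J_pwC[OF that] pwC_L2 unfolding isonormal_def by blast
  then have "(\<lambda>\<omega>. \<Sum>j\<in>J. c' j * W (\<phi>' j) \<omega>) \<in> borel_measurable N"
    by (intro borel_measurable_sum borel_measurable_times borel_measurable_const)
  moreover have "(\<integral>\<omega>. (\<Sum>j\<in>J. c' j * W (\<phi>' j) \<omega>)\<^sup>2 \<partial>N) \<le> \<delta>\<^sup>2"
  proof -
    have "(\<Sum>j\<in>J. c' j * \<phi>' j x) = \<sigma> * ((\<Sum>i\<in>I. c i * \<phi> i x) - \<psi> x)" for x
      using J_sum[of "\<lambda>g. g x"] by (simp add: right_diff_distrib)
    then have "(\<integral>\<omega>. (\<Sum>j\<in>J. c' j * W (\<phi>' j) \<omega>)\<^sup>2 \<partial>N)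
        = \<sigma>\<^sup>2 * (\<integral>x. ((\<Sum>i\<in>I. c i * \<phi> i x) - \<psi> x)\<^sup>2 \<partial>lebesgue)"
      using moments(2) by (simp only: power_mult_distrib) (rule integral_mult_right_zero)
    with assms(5) show ?thesis by simp
  qed
  ultimately have "integrable N (\<lambda>\<omega>. \<Sum>j\<in>J. c' j * W (\<phi>' j) \<omega>)"
    "(\<integral>\<omega>. \<bar>\<Sum>j\<in>J. c' j * W (\<phi>' j) \<omega>\<bar> \<partial>N) \<le> \<delta>"
    using integral_abs_le_of_second_moment[OF _ _ moments(1) _ \<open>\<delta> > 0\<close>] by blast+
  moreover have "(\<Sum>j\<in>J. c' j * W (\<phi>' j) \<omega>) = \<sigma> * (\<Sum>i\<in>I. c i * W (\<phi> i) \<omega>) - \<sigma> * W \<psi> \<omega>" for \<omega>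
    by (rule J_sum)
  ultimately show "integrable N (\<lambda>\<omega>. \<sigma> * (\<Sum>i\<in>I. c i * W (\<phi> i) \<omega>) - \<sigma> * W \<psi> \<omega>)"
    and "(\<integral>\<omega>. \<bar>\<sigma> * (\<Sum>i\<in>I. c i * W (\<phi> i) \<omega>) - \<sigma> * W \<psi> \<omega>\<bar> \<partial>N) \<le> \<delta>"
    by (simp_all only:)
qed

lemma conv_distr_S_sum:
  fixes \<zeta> :: "int^'d \<Rightarrow> 'a \<Rightarrow> real" and W :: "(real^'d \<Rightarrow> real) \<Rightarrow> 'w \<Rightarrow> real"
    and \<phi> :: "'i \<Rightarrow> real^'d \<Rightarrow> real"
  assumes field: "centered_stationary_field M \<zeta>"
    and summable: "(\<lambda>k. \<bar>covariance M (\<zeta> 0) (\<zeta> k)\<bar>) summable_on UNIV"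
    and iso: "isonormal N W" and dense: "L2_dense_in D pwC"
    and conv_D: "\<And>\<psi>. \<psi> \<in> D \<Longrightarrow>
      conv_distr (\<lambda>n. distr M borel (S \<zeta> n \<psi>)) (distr N borel (\<lambda>\<omega>. \<sigma> * W \<psi> \<omega>))"
    and "finite I" "\<And>i. i \<in> I \<Longrightarrow> \<phi> i \<in> pwC"
  shows "conv_distr (\<lambda>n. distr M borel (S \<zeta> n (\<lambda>x. \<Sum>i\<in>I. c i * \<phi> i x)))
    (distr N borel (\<lambda>\<omega>. \<sigma> * (\<Sum>i\<in>I. c i * W (\<phi> i) \<omega>)))"
proof -
  interpret centered_stationary_field M \<zeta> by fact
  define \<Phi> where "\<Phi> x = (\<Sum>i\<in>I. c i * \<phi> i x)" for x
  define C where "C = (\<Sum>\<^sub>\<infinity>m. \<bar>covariance M (\<zeta> 0) (\<zeta> m)\<bar>)"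
  have "\<Phi> \<in> pwC" unfolding \<Phi>_def[abs_def] using assms(6,7) by (intro pwC_sum pwC_scale)
  have "C \<ge> 0" unfolding C_def by (intro infsum_nonneg) auto
  have "prob_space N" and meas_W: "\<And>\<psi>. \<psi> \<in> pwC \<Longrightarrow> W \<psi> \<in> borel_measurable N"
    using iso pwC_L2 unfolding isonormal_def by blast+
  have "(\<lambda>\<omega>. \<sigma> * (\<Sum>i\<in>I. c i * W (\<phi> i) \<omega>)) \<in> borel_measurable N"
    using assms(7) meas_W
    by (intro borel_measurable_times borel_measurable_const borel_measurable_sum) auto
  then show ?thesis
    unfolding \<Phi>_def[symmetric]
  proof (rule conv_distr_approx[OF prob_space_axioms \<open>prob_space N\<close> borel_measurable_S[OF measurable_field]])
    fix \<delta> :: real assume "\<delta> > 0"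
    define \<kappa> where "\<kappa> = C + \<sigma>\<^sup>2 + 1"
    have "\<kappa> > 0" using \<open>C \<ge> 0\<close> by (simp add: \<kappa>_def add_nonneg_pos)
    then obtain \<psi> where "\<psi> \<in> D" "\<psi> \<in> pwC" and "(\<integral>x. (\<Phi> x - \<psi> x)\<^sup>2 \<partial>lebesgue) < \<delta>\<^sup>2 / \<kappa>"
      using L2_dense_inE[OF dense \<open>\<Phi> \<in> pwC\<close>, of "\<delta>\<^sup>2 / \<kappa>"] \<open>\<delta> > 0\<close> by auto
    define h where "h x = \<Phi> x - \<psi> x" for x
    define d2 where "d2 = (\<integral>x. (h x)\<^sup>2 \<partial>lebesgue)"
    have "h \<in> pwC" unfolding h_def[abs_def] using \<open>\<Phi> \<in> pwC\<close> \<open>\<psi> \<in> pwC\<close> by (rule pwC_diff)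
    have "d2 < \<delta>\<^sup>2 / \<kappa>" unfolding d2_def h_def by fact
    then have "\<kappa> * d2 < \<delta>\<^sup>2" using \<open>\<kappa> > 0\<close> by (simp add: pos_less_divide_eq mult.commute)
    moreover have "\<kappa> * d2 = C * d2 + \<sigma>\<^sup>2 * d2 + d2" by (simp add: \<kappa>_def algebra_simps)
    moreover have "0 \<le> d2" unfolding d2_def by (intro integral_nonneg_AE) auto
    moreover from this have "0 \<le> C * d2" "0 \<le> \<sigma>\<^sup>2 * d2" using \<open>C \<ge> 0\<close> by simp_all
    ultimately have "C * d2 < \<delta>\<^sup>2" "\<sigma>\<^sup>2 * d2 \<le> \<delta>\<^sup>2" by linarith+
    have S_diff_eq: "S \<zeta> n \<Phi> \<omega> - S \<zeta> n \<psi> \<omega> = S \<zeta> n h \<omega>" for n \<omega>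
      unfolding h_def[abs_def]
      by (rule S_diff[OF pwC_bounded_support[OF \<open>\<Phi> \<in> pwC\<close>] pwC_bounded_support[OF \<open>\<psi> \<in> pwC\<close>],
          symmetric])
    show "\<exists>Vn V. (\<forall>n. Vn n \<in> borel_measurable M) \<and> V \<in> borel_measurable N \<and>
      conv_distr (\<lambda>n. distr M borel (Vn n)) (distr N borel V) \<and>
      (\<forall>n. integrable M (\<lambda>\<omega>. S \<zeta> n \<Phi> \<omega> - Vn n \<omega>)) \<and>
      eventually (\<lambda>n. (\<integral>\<omega>. \<bar>S \<zeta> n \<Phi> \<omega> - Vn n \<omega>\<bar> \<partial>M) \<le> \<delta>) sequentially \<and>
      integrable N (\<lambda>\<omega>. \<sigma> * (\<Sum>i\<in>I. c i * W (\<phi> i) \<omega>) - V \<omega>) \<and>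
      (\<integral>\<omega>. \<bar>\<sigma> * (\<Sum>i\<in>I. c i * W (\<phi> i) \<omega>) - V \<omega>\<bar> \<partial>N) \<le> \<delta>"
    proof (intro exI[of _ "\<lambda>n. S \<zeta> n \<psi>"] exI[of _ "\<lambda>\<omega>. \<sigma> * W \<psi> \<omega>"] conjI allI)
      show "S \<zeta> n \<psi> \<in> borel_measurable M" for n
        by (rule borel_measurable_S[OF measurable_field])
      show "(\<lambda>\<omega>. \<sigma> * W \<psi> \<omega>) \<in> borel_measurable N"
        using meas_W[OF \<open>\<psi> \<in> pwC\<close>] by measurable
      show "conv_distr (\<lambda>n. distr M borel (S \<zeta> n \<psi>)) (distr N borel (\<lambda>\<omega>. \<sigma> * W \<psi> \<omega>))"
        using \<open>\<psi> \<in> D\<close> by (rule conv_D)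
      show "integrable M (\<lambda>\<omega>. S \<zeta> n \<Phi> \<omega> - S \<zeta> n \<psi> \<omega>)" for n
        unfolding S_diff_eq by (intro integrable_S integrable_field)
      show "eventually (\<lambda>n. (\<integral>\<omega>. \<bar>S \<zeta> n \<Phi> \<omega> - S \<zeta> n \<psi> \<omega>\<bar> \<partial>M) \<le> \<delta>) sequentially"
        unfolding S_diff_eq
        using field summable \<open>h \<in> pwC\<close> \<open>C * d2 < \<delta>\<^sup>2\<close> \<open>\<delta> > 0\<close>
        unfolding C_def d2_def by (rule eventually_integral_abs_S_le)
      show "integrable N (\<lambda>\<omega>. \<sigma> * (\<Sum>i\<in>I. c i * W (\<phi> i) \<omega>) - \<sigma> * W \<psi> \<omega>)"
        and "(\<integral>\<omega>. \<bar>\<sigma> * (\<Sum>i\<in>I. c i * W (\<phi> i) \<omega>) - \<sigma> * W \<psi> \<omega>\<bar> \<partial>N) \<le> \<delta>"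
        using \<open>\<sigma>\<^sup>2 * d2 \<le> \<delta>\<^sup>2\<close> \<open>\<delta> > 0\<close>
        by (intro isonormal_sum_diff_L1_le[OF iso assms(6,7) \<open>\<psi> \<in> pwC\<close>];
            simp add: d2_def h_def \<Phi>_def)+
    qed
  qed
qed

theorem lemma2p5:
  fixes M :: "'a measure" and \<zeta> :: "int^'d \<Rightarrow> 'a \<Rightarrow> real"
    and N :: "'w measure" and W :: "(real^'d \<Rightarrow> real) \<Rightarrow> 'w \<Rightarrow> real"
    and D :: "(real^'d \<Rightarrow> real) set" and \<sigma> :: real
  assumes "prob_space M"
    and "\<And>k. \<zeta> k \<in> borel_measurable M"
    and "stationary_field M \<zeta>"
    and "integrable M (\<lambda>\<omega>. (\<zeta> 0 \<omega>)\<^sup>2)"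
    and "prob_space.expectation M (\<zeta> 0) = 0"
    and "(\<lambda>k. \<bar>covariance M (\<zeta> 0) (\<zeta> k)\<bar>) summable_on UNIV"
    and "\<sigma> = sqrt (\<Sum>\<^sub>\<infinity>k. covariance M (\<zeta> 0) (\<zeta> k))"
    and "isonormal N W"
    and "L2_dense_in D pwC"
    and "\<And>\<psi>. \<psi> \<in> D \<Longrightarrow>
           conv_distr (\<lambda>n. distr M borel (S \<zeta> n \<psi>)) (distr N borel (\<lambda>\<omega>. \<sigma> * W \<psi> \<omega>))"
  shows "\<And>\<phi> :: 'm::finite \<Rightarrow> real^'d \<Rightarrow> real. (\<And>i. \<phi> i \<in> pwC) \<Longrightarrow>
           conv_distr (\<lambda>n. distr M borel (\<lambda>\<omega>. \<chi> i. S \<zeta> n (\<phi> i) \<omega>))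
                      (distr N borel (\<lambda>\<omega>. \<chi> i. \<sigma> * W (\<phi> i) \<omega>))"
proof -
  fix \<phi> :: "'m::finite \<Rightarrow> real^'d \<Rightarrow> real"
  assume \<phi>: "\<And>i. \<phi> i \<in> pwC"
  have field: "centered_stationary_field M \<zeta>"
    using assms(1-5)
    by (simp add: centered_stationary_field_def centered_stationary_field_axioms_def)
  have "prob_space N" and "\<And>i. W (\<phi> i) \<in> borel_measurable N"
    using assms(8) \<phi> pwC_L2 unfolding isonormal_def by blast+
  text \<open>The value of \<open>\<sigma>\<close> is irrelevant here: it enters only through the hypothesis on \<open>D\<close>.\<close>
  show "conv_distr (\<lambda>n. distr M borel (\<lambda>\<omega>. \<chi> i. S \<zeta> n (\<phi> i) \<omega>))
      (distr N borel (\<lambda>\<omega>. \<chi> i. \<sigma> * W (\<phi> i) \<omega>))"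
  proof (rule cramer_wold[OF assms(1) \<open>prob_space N\<close>])
    show "(\<lambda>\<omega>. \<chi> i. S \<zeta> n (\<phi> i) \<omega>) \<in> borel_measurable M" for n
      using assms(2) by (intro borel_measurable_vec_lambda borel_measurable_S)
    show "(\<lambda>\<omega>. \<chi> i. \<sigma> * W (\<phi> i) \<omega>) \<in> borel_measurable N"
      using \<open>\<And>i. W (\<phi> i) \<in> borel_measurable N\<close> by (intro borel_measurable_vec_lambda) measurable
    fix t :: "real^'m"
    have "t \<bullet> (\<chi> i. S \<zeta> n (\<phi> i) \<omega>) = S \<zeta> n (\<lambda>x. \<Sum>i\<in>UNIV. t $ i * \<phi> i x) \<omega>" for n \<omega>
      using \<phi> by (simp add: inner_vec_def S_sum pwC_bounded_support mult.commute)
    moreover have "t \<bullet> (\<chi> i. \<sigma> * W (\<phi> i) \<omega>) = \<sigma> * (\<Sum>i\<in>UNIV. t $ i * W (\<phi> i) \<omega>)" for \<omega>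
      by (simp add: inner_vec_def sum_distrib_left mult.left_commute)
    ultimately show "conv_distr (\<lambda>n. distr M borel (\<lambda>\<omega>. t \<bullet> (\<chi> i. S \<zeta> n (\<phi> i) \<omega>)))
        (distr N borel (\<lambda>\<omega>. t \<bullet> (\<chi> i. \<sigma> * W (\<phi> i) \<omega>)))"
      using conv_distr_S_sum[OF field assms(6,8,9,10), of UNIV \<phi> "\<lambda>i. t $ i"] \<phi> by simp
  qed
qed

end
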